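(* Let $\mathcal N$ be a null structure on an oriented three-dimensional (pseudo-)Riemannian manifold $(\mathcal M,g)$ and $k^a$ any generator of $\mathcal N$. (1) If $\mathcal N$ is co-geodetic, then $\mathcal N$ is principal: $k^ak^b\Phi_{ab}=0$. (2) If $\mathcal N$ is parallel, then $\Phi_{ab}$ is algebraically special with $\mathcal N$ multiple principal: $k^c\Phi_{c[a}k_{b]}=0$.
   Context: Abstract index notation; $\nabla$ the Levi-Civita connection; brackets denote (skew-)symmetrisation with weight $1/2$. $R_{abd}{}^cV^d=2\nabla_{[a}\nabla_{b]}V^c$, $R_{ab}=R_{acb}{}^c$, $R=R_a{}^a$, $\Phi_{ab}=R_{ab}-\frac13Rg_{ab}$. $g,\nabla$ extended complex-(bi)linearly to $T^{\mathbb C}\mathcal M$. A null structure is a complex line subbundle $\mathcal N\subset T^{\mathbb C}\mathcal M$ with $g(k,k)=0$ for all sections; a generator is a nowhere-vanishing section; $\mathcal N^\perp$ its orthogonal complement. $\mathcal N$ is co-geodetic if $g(\nabla_XY,Z)=0$ for all sections $X,Y$ of $\mathcal N^\perp$, $Z$ of $\mathcal N$; $\mathcal N$ is parallel if $\nabla_YX\in\Gamma(\mathcal N)$ for all $X\in\Gamma(\mathcal N)$ and all vector fields $Y$. *)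

theory Defs
  imports "HOL-Analysis.Analysis"
begin

text \<open>Local coordinate model: the manifold is an open set U of R^3 (coordinates x^1,x^2,x^3,
  index type 3), the metric is a smooth field of symmetric nondegenerate 3x3 real matrices.
  Index conventions: g x $ a $ b = g_ab, Chr g x c a b = Chr^c_ab,
  Riem g x a b d c = R_abd^c.\<close>

type_synonym pt = "real^3"

definition pd :: "3 \<Rightarrow> (pt \<Rightarrow> 'b::real_normed_vector) \<Rightarrow> pt \<Rightarrow> 'b" where
  "pd i f x = frechet_derivative f (at x) (axis i 1)"

fun Ck_on :: "nat \<Rightarrow> pt set \<Rightarrow> (pt \<Rightarrow> 'b::real_normed_vector) \<Rightarrow> bool" where
  "Ck_on 0 U f = continuous_on U f"
| "Ck_on (Suc n) U f = (f differentiable_on U \<and> (\<forall>i. Ck_on n U (pd i f)))"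

definition smooth_on :: "pt set \<Rightarrow> (pt \<Rightarrow> 'b::real_normed_vector) \<Rightarrow> bool" where
  "smooth_on U f = (\<forall>n. Ck_on n U f)"

definition pr_metric :: "pt set \<Rightarrow> (pt \<Rightarrow> real^3^3) \<Rightarrow> bool" where
  "pr_metric U g = (open U \<and> smooth_on U g \<and>
     (\<forall>x\<in>U. transpose (g x) = g x \<and> det (g x) \<noteq> 0))"

definition ginv :: "(pt \<Rightarrow> real^3^3) \<Rightarrow> pt \<Rightarrow> real^3^3" where
  "ginv g x = matrix_inv (g x)"

definition Chr :: "(pt \<Rightarrow> real^3^3) \<Rightarrow> pt \<Rightarrow> 3 \<Rightarrow> 3 \<Rightarrow> 3 \<Rightarrow> real" where
  "Chr g x c a b = (\<Sum>d\<in>UNIV. ginv g x $ c $ d *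
      (pd a (\<lambda>y. g y $ d $ b) x + pd b (\<lambda>y. g y $ d $ a) x - pd d (\<lambda>y. g y $ a $ b) x)) / 2"

text \<open>Riemann tensor R_abd^c with R_abd^c V^d = 2 nabla_[a nabla_b] V^c.\<close>
definition Riem :: "(pt \<Rightarrow> real^3^3) \<Rightarrow> pt \<Rightarrow> 3 \<Rightarrow> 3 \<Rightarrow> 3 \<Rightarrow> 3 \<Rightarrow> real" where
  "Riem g x a b d c =
     pd a (\<lambda>y. Chr g y c b d) x - pd b (\<lambda>y. Chr g y c a d) x
     + (\<Sum>e\<in>UNIV. Chr g x c a e * Chr g x e b d - Chr g x c b e * Chr g x e a d)"

definition Ric :: "(pt \<Rightarrow> real^3^3) \<Rightarrow> pt \<Rightarrow> 3 \<Rightarrow> 3 \<Rightarrow> real" where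
  "Ric g x a b = (\<Sum>c\<in>UNIV. Riem g x a c b c)"

definition scal :: "(pt \<Rightarrow> real^3^3) \<Rightarrow> pt \<Rightarrow> real" where
  "scal g x = (\<Sum>a\<in>UNIV. \<Sum>b\<in>UNIV. ginv g x $ a $ b * Ric g x a b)"

definition Phi :: "(pt \<Rightarrow> real^3^3) \<Rightarrow> pt \<Rightarrow> 3 \<Rightarrow> 3 \<Rightarrow> real" where
  "Phi g x a b = Ric g x a b - scal g x * g x $ a $ b / 3"

definition gC :: "(pt \<Rightarrow> real^3^3) \<Rightarrow> pt \<Rightarrow> complex^3 \<Rightarrow> complex^3 \<Rightarrow> complex" where
  "gC g x u v = (\<Sum>a\<in>UNIV. \<Sum>b\<in>UNIV. of_real (g x $ a $ b) * u $ a * v $ b)"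

definition covD :: "(pt \<Rightarrow> real^3^3) \<Rightarrow> (pt \<Rightarrow> complex^3) \<Rightarrow> (pt \<Rightarrow> complex^3) \<Rightarrow> pt \<Rightarrow> complex^3" where
  "covD g X Y x = (\<chi> c. \<Sum>a\<in>UNIV. X x $ a *
      (pd a (\<lambda>y. Y y $ c) x + (\<Sum>b\<in>UNIV. of_real (Chr g x c a b) * Y x $ b)))"

definition complexify :: "(pt \<Rightarrow> real^3) \<Rightarrow> pt \<Rightarrow> complex^3" where
  "complexify Y x = (\<chi> a. of_real (Y x $ a))"

text \<open>A null structure N on U given by a generator k: a smooth nowhere-vanishing complex
  vector field with g(k,k)=0; N_x = span_C {k x}.\<close>
definition null_generator :: "pt set \<Rightarrow> (pt \<Rightarrow> real^3^3) \<Rightarrow> (pt \<Rightarrow> complex^3) \<Rightarrow> bool" where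
  "null_generator U g k = (smooth_on U k \<and> (\<forall>x\<in>U. k x \<noteq> 0 \<and> gC g x (k x) (k x) = 0))"

definition sec_N :: "pt set \<Rightarrow> (pt \<Rightarrow> complex^3) \<Rightarrow> (pt \<Rightarrow> complex^3) \<Rightarrow> bool" where
  "sec_N U k Z = (smooth_on U Z \<and> (\<forall>x\<in>U. \<exists>c::complex. Z x = c *s k x))"

definition sec_Nperp :: "pt set \<Rightarrow> (pt \<Rightarrow> real^3^3) \<Rightarrow> (pt \<Rightarrow> complex^3) \<Rightarrow> (pt \<Rightarrow> complex^3) \<Rightarrow> bool" where
  "sec_Nperp U g k X = (smooth_on U X \<and> (\<forall>x\<in>U. gC g x (X x) (k x) = 0))"

definition co_geodetic :: "pt set \<Rightarrow> (pt \<Rightarrow> real^3^3) \<Rightarrow> (pt \<Rightarrow> complex^3) \<Rightarrow> bool" where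
  "co_geodetic U g k = (\<forall>X Y Z. sec_Nperp U g k X \<longrightarrow> sec_Nperp U g k Y \<longrightarrow> sec_N U k Z \<longrightarrow>
      (\<forall>x\<in>U. gC g x (covD g X Y x) (Z x) = 0))"

definition parallel_ns :: "pt set \<Rightarrow> (pt \<Rightarrow> real^3^3) \<Rightarrow> (pt \<Rightarrow> complex^3) \<Rightarrow> bool" where
  "parallel_ns U g k = (\<forall>X Y. sec_N U k X \<longrightarrow> smooth_on U Y \<longrightarrow>
      (\<forall>x\<in>U. \<exists>c::complex. covD g (complexify Y) X x = c *s k x))"

text \<open>k^a k^b Phi_ab, and k^c Phi_c[a k_b] (up to the factor 1/2).\<close>
definition PhiC :: "(pt \<Rightarrow> real^3^3) \<Rightarrow> pt \<Rightarrow> 3 \<Rightarrow> 3 \<Rightarrow> complex" where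
  "PhiC g x a b = of_real (Phi g x a b)"

definition lower :: "(pt \<Rightarrow> real^3^3) \<Rightarrow> pt \<Rightarrow> complex^3 \<Rightarrow> 3 \<Rightarrow> complex" where
  "lower g x v b = (\<Sum>d\<in>UNIV. of_real (g x $ b $ d) * v $ d)"

end

theory Submission
  imports Defs
begin

(*
  Both parts are pointwise consequences of the Ricci identity R_abd^c k^d = 2 nabla_[a nabla_b] k^c.

  If N is co-geodetic, the covector nabla_a k_b vanishes on k^perp x k^perp and is orthogonal to
  k in b, so nabla_a k_b = k_a mu_b + nu_a k_b with mu orthogonal to k. Hence k is geodesic,
  nabla_k k = theta k with theta = nabla_a k^a, and (nabla_a k^c)(nabla_c k^a) = theta^2. The
  contracted Ricci identity R_ab k^a k^b = k(theta) - nabla_c (theta k^c) + theta^2 then vanishes.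

  If N is parallel, nabla_a k = beta_a k, so R_abdc k^d annihilates k^perp in c, that is
  R_abdc k^d = F_ab k_c. The pair symmetry of the curvature tensor moves k to the first slot and
  shows that k^c R_ca annihilates k^perp, i.e. it is a multiple of k_a.

  In both cases the trace part of Phi does not contribute since k is null.
*)

section \<open>Partial derivatives and \<open>C\<^sup>k\<close> functions\<close>

lemma pd_eq_derivative: "(f has_derivative f') (at x) \<Longrightarrow> pd i f x = f' (axis i 1)"
  unfolding pd_def using frechet_derivative_at by metis

lemma has_derivative_cong_open:
  assumes "open U" "x \<in> U" "\<And>y. y \<in> U \<Longrightarrow> f y = h y"
  shows "(f has_derivative D) (at x) \<longleftrightarrow> (h has_derivative D) (at x)"
  using has_derivative_transform_within_open[OF _ assms(1,2), of f D UNIV h]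
        has_derivative_transform_within_open[OF _ assms(1,2), of h D UNIV f] assms(3)
  by auto

lemma pd_cong_open:
  assumes "open U" "x \<in> U" "\<And>y. y \<in> U \<Longrightarrow> f y = h y"
  shows "pd i f x = pd i h x"
  using has_derivative_cong_open[OF assms] unfolding pd_def frechet_derivative_def by simp

lemma differentiable_at_cong_open:
  assumes "open U" "x \<in> U" "\<And>y. y \<in> U \<Longrightarrow> f y = h y" "f differentiable at x"
  shows "h differentiable at x"
proof -
  obtain D where "(f has_derivative D) (at x)"
    using assms(4) unfolding differentiable_def by blast
  then show ?thesis
    using assms has_derivative_cong_open[of U x f h D] unfolding differentiable_def by blast
qed

lemma pd_const: "pd i (\<lambda>z. c) x = 0"
  by (subst pd_eq_derivative[of _ "\<lambda>_. 0"]) (auto intro: derivative_eq_intros)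

lemma pd_eq_0_if_vanishing_on_open:
  assumes "open U" "x \<in> U" "\<And>y. y \<in> U \<Longrightarrow> f y = 0"
  shows "pd i f x = 0"
  using pd_cong_open[OF assms(1,2), of f "\<lambda>_. 0"] assms(3) pd_const by metis

lemma pd_bounded_linear:
  assumes "bounded_linear L" "f differentiable at x"
  shows "pd i (\<lambda>z. L (f z)) x = L (pd i f x)"
  using pd_eq_derivative[OF bounded_linear.has_derivative[OF assms(1) frechet_derivative_works[THEN iffD1, OF assms(2)]]]
  unfolding pd_def by simp

lemma pd_add:
  assumes "f differentiable at x" "h differentiable at x"
  shows "pd i (\<lambda>z. f z + h z) x = pd i f x + pd i h x"
  using pd_eq_derivative[OF has_derivative_add[OF assms[unfolded frechet_derivative_works]]]
  unfolding pd_def by simp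

lemma pd_mult:
  fixes f h :: "pt \<Rightarrow> 'a::real_normed_algebra"
  assumes "f differentiable at x" "h differentiable at x"
  shows "pd i (\<lambda>z. f z * h z) x = pd i f x * h x + f x * pd i h x"
  using pd_eq_derivative[OF has_derivative_mult[OF assms[unfolded frechet_derivative_works]]]
  unfolding pd_def by (simp add: add.commute)

lemma pd_sum:
  assumes "finite A" "\<And>a. a \<in> A \<Longrightarrow> f a differentiable at x"
  shows "pd i (\<lambda>z. \<Sum>a\<in>A. f a z) x = (\<Sum>a\<in>A. pd i (f a) x)"
  using assms
proof (induction A rule: finite_induct)
  case empty
  then show ?case by (simp add: pd_const)
next
  case (insert a A)
  then have "pd i (\<lambda>z. f a z + (\<Sum>a\<in>A. f a z)) x = pd i (f a) x + pd i (\<lambda>z. \<Sum>a\<in>A. f a z) x"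
    by (intro pd_add differentiable_sum) auto
  with insert show ?case by simp
qed

lemma differentiable_of_real:
  "f differentiable at x \<Longrightarrow> (\<lambda>z. complex_of_real (f z)) differentiable at x"
  using differentiable_compose[of of_real f] bounded_linear_imp_differentiable[OF bounded_linear_of_real]
  by (simp add: o_def)

lemma pd_of_real:
  "f differentiable at x \<Longrightarrow> pd i (\<lambda>z. complex_of_real (f z)) x = of_real (pd i f x)"
  using pd_bounded_linear[OF bounded_linear_of_real] by blast

lemma Ck_on_cong_open:
  assumes "open U" "\<And>y. y \<in> U \<Longrightarrow> f y = h y" "Ck_on n U f"
  shows "Ck_on n U h"
  using assms(2,3)
proof (induction n arbitrary: f h)
  case 0
  then show ?case using continuous_on_cong by (metis Ck_on.simps(1))
next
  case (Suc n)
  have "h differentiable_on U"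
    unfolding differentiable_on_eq_differentiable_at[OF assms(1)]
    using Suc.prems differentiable_at_cong_open[OF assms(1), of _ f h]
    by (simp add: differentiable_on_eq_differentiable_at[OF assms(1)])
  moreover have "Ck_on n U (pd i h)" for i
  proof -
    have "pd i f y = pd i h y" if "y \<in> U" for y
      using pd_cong_open[OF assms(1) that] Suc.prems(1) by blast
    then show ?thesis using Suc.IH[of "pd i f" "pd i h"] Suc.prems(2) by simp
  qed
  ultimately show ?case by simp
qed

lemma Ck_on_SucD: "Ck_on (Suc n) U f \<Longrightarrow> Ck_on n U f"
  by (induction n arbitrary: f) (auto simp: differentiable_imp_continuous_on)

lemma smooth_on_imp_Ck_on: "smooth_on U f \<Longrightarrow> Ck_on n U f"
  unfolding smooth_on_def by blast

lemma Ck_on_Suc_differentiable_at: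
  "open U \<Longrightarrow> Ck_on (Suc n) U f \<Longrightarrow> x \<in> U \<Longrightarrow> f differentiable at x"
  using differentiable_on_eq_differentiable_at by auto

lemma Ck_on_2_differentiable_at:
  "open U \<Longrightarrow> Ck_on 2 U f \<Longrightarrow> x \<in> U \<Longrightarrow> f differentiable at x"
  unfolding numeral_2_eq_2 using Ck_on_Suc_differentiable_at by blast

lemma Ck_on_2_pd_differentiable_at:
  "open U \<Longrightarrow> Ck_on 2 U f \<Longrightarrow> x \<in> U \<Longrightarrow> pd i f differentiable at x"
  using Ck_on_Suc_differentiable_at[of U 0 "pd i f"] by (simp add: numeral_2_eq_2)

lemma Ck_on_const: "Ck_on n U (\<lambda>y. c)"
proof (induction n arbitrary: c)
  case (Suc n)
  have "pd i (\<lambda>y. c) = (\<lambda>y. 0)" for i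
    using pd_const by blast
  then show ?case using Suc by simp
qed simp

lemma Ck_on_bounded_linear:
  assumes "open U" "bounded_linear L" "Ck_on n U f"
  shows "Ck_on n U (\<lambda>y. L (f y))"
  using assms(3)
proof (induction n arbitrary: f)
  case 0
  then show ?case using bounded_linear.continuous_on[OF assms(2)] by simp
next
  case (Suc n)
  have f: "f differentiable at y" if "y \<in> U" for y
    using Ck_on_Suc_differentiable_at[OF assms(1) Suc.prems that] .
  then have "(\<lambda>y. L (f y)) differentiable_on U"
    using differentiable_compose[OF bounded_linear_imp_differentiable[OF assms(2)], of f]
    by (auto simp: o_def differentiable_on_eq_differentiable_at[OF assms(1)])
  moreover have "Ck_on n U (pd i (\<lambda>y. L (f y)))" for i
    using Suc Ck_on_cong_open[OF assms(1), of "\<lambda>y. L (pd i f y)"] pd_bounded_linear[OF assms(2) f]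
    by simp
  ultimately show ?case by simp
qed

lemma Ck_on_add:
  assumes "open U" "Ck_on n U f" "Ck_on n U h"
  shows "Ck_on n U (\<lambda>y. f y + h y)"
  using assms(2,3)
proof (induction n arbitrary: f h)
  case 0
  then show ?case by (simp add: continuous_on_add)
next
  case (Suc n)
  have fh: "f differentiable at y" "h differentiable at y" if "y \<in> U" for y
    using Ck_on_Suc_differentiable_at[OF assms(1) Suc.prems(1) that]
      Ck_on_Suc_differentiable_at[OF assms(1) Suc.prems(2) that] by auto
  then have "(\<lambda>y. f y + h y) differentiable_on U"
    by (auto simp: differentiable_on_eq_differentiable_at[OF assms(1)])
  moreover have "Ck_on n U (pd i (\<lambda>y. f y + h y))" for i
    using Suc Ck_on_cong_open[OF assms(1), of "\<lambda>y. pd i f y + pd i h y"] pd_add[OF fh]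
    by simp
  ultimately show ?case by simp
qed

lemma Ck_on_bounded_bilinear:
  assumes "open U" "bounded_bilinear P" "Ck_on n U f" "Ck_on n U h"
  shows "Ck_on n U (\<lambda>y. P (f y) (h y))"
  using assms(3,4)
proof (induction n arbitrary: f h)
  case 0
  then show ?case using bounded_bilinear.continuous_on[OF assms(2)] by simp
next
  case (Suc n)
  have product_rule: "((\<lambda>y. P (f y) (h y)) has_derivative
      (\<lambda>v. P (f y) (frechet_derivative h (at y) v) + P (frechet_derivative f (at y) v) (h y))) (at y)"
    if "y \<in> U" for y
    using Ck_on_Suc_differentiable_at[OF assms(1) Suc.prems(1) that]
      Ck_on_Suc_differentiable_at[OF assms(1) Suc.prems(2) that]
    by (intro bounded_bilinear.FDERIV[OF assms(2)]) (simp_all add: frechet_derivative_works)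
  then have "(\<lambda>y. P (f y) (h y)) differentiable_on U"
    by (meson assms(1) differentiable_def differentiable_on_eq_differentiable_at)
  moreover have "Ck_on n U (pd i (\<lambda>y. P (f y) (h y)))" for i
  proof -
    have "Ck_on n U (\<lambda>y. P (f y) (pd i h y) + P (pd i f y) (h y))"
      using Suc.IH Suc.prems Ck_on_SucD[of n U f] Ck_on_SucD[of n U h]
      by (intro Ck_on_add[OF assms(1)]) auto
    moreover have "P (f y) (pd i h y) + P (pd i f y) (h y) = pd i (\<lambda>y. P (f y) (h y)) y" if "y \<in> U" for y
      using pd_eq_derivative[OF product_rule[OF that]] unfolding pd_def by simp
    ultimately show ?thesis
      using Ck_on_cong_open[OF assms(1), of "\<lambda>y. P (f y) (pd i h y) + P (pd i f y) (h y)"] by blast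
  qed
  ultimately show ?case by simp
qed

lemma Ck_on_sum:
  assumes "open U" "finite A" "\<And>a. a \<in> A \<Longrightarrow> Ck_on n U (F a)"
  shows "Ck_on n U (\<lambda>y. \<Sum>a\<in>A. F a y)"
  using assms(2,3)
proof (induction A rule: finite_induct)
  case (insert a A)
  then show ?case using Ck_on_add[OF assms(1), of n "F a" "\<lambda>y. \<Sum>a\<in>A. F a y"] by simp
qed (simp add: Ck_on_const)

section \<open>Symmetry of second partial derivatives\<close>

lemma has_real_derivative_pd_along_axis:
  fixes f :: "pt \<Rightarrow> real"
  assumes "f differentiable at (p + t *\<^sub>R axis i 1)"
  shows "((\<lambda>s. f (p + s *\<^sub>R axis i 1)) has_real_derivative pd i f (p + t *\<^sub>R axis i 1)) (at t)"
proof -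
  let ?D = "frechet_derivative f (at (p + t *\<^sub>R axis i 1))"
  have "((\<lambda>s. p + s *\<^sub>R axis i 1) has_derivative (\<lambda>s. s *\<^sub>R axis i 1)) (at t)"
    by (auto intro!: derivative_eq_intros)
  from has_derivative_compose[OF this assms[unfolded frechet_derivative_works]]
  have "((\<lambda>s. f (p + s *\<^sub>R axis i 1)) has_derivative (\<lambda>s. ?D (s *\<^sub>R axis i 1))) (at t)"
    by simp
  moreover have "(\<lambda>s. ?D (s *\<^sub>R axis i 1)) = (*) (?D (axis i 1))"
    using linear.scaleR[OF linear_frechet_derivative[OF assms]] by (auto simp: mult.commute)
  ultimately show ?thesis
    unfolding has_field_derivative_def pd_def by simp
qed

lemma axis_combination_in_ball:
  fixes s t :: real and x :: pt
  assumes "0 \<le> s" "0 \<le> t" "s + t < r"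
  shows "x + s *\<^sub>R axis i 1 + t *\<^sub>R axis j 1 \<in> ball x r"
proof -
  have "norm (s *\<^sub>R axis i (1::real) + t *\<^sub>R axis j 1) \<le> s + t"
    using norm_triangle_ineq[of "s *\<^sub>R axis i (1::real)" "t *\<^sub>R axis j 1"] assms by simp
  moreover have "dist x (x + w) = norm w" for w :: pt
    by (simp add: dist_norm)
  ultimately show ?thesis
    using assms by (simp add: add.assoc)
qed

text \<open>Two applications of the mean value theorem: first to \<open>s \<mapsto> f (x + h e\<^sub>j + s e\<^sub>i) - f (x + s e\<^sub>i)\<close>,
  then to \<open>t \<mapsto> \<partial>\<^sub>i f (x + s\<^sub>1 e\<^sub>i + t e\<^sub>j)\<close>.\<close>

lemma second_difference_mvt:
  fixes f :: "pt \<Rightarrow> real"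
  assumes f: "\<And>y. y \<in> ball x r \<Longrightarrow> f differentiable at y"
    and pd_f: "\<And>y. y \<in> ball x r \<Longrightarrow> pd i f differentiable at y"
    and h: "0 < h" "2 * h < r"
  shows "\<exists>q\<in>ball x (2 * h).
     f (x + h *\<^sub>R axis j 1 + h *\<^sub>R axis i 1) - f (x + h *\<^sub>R axis i 1) - f (x + h *\<^sub>R axis j 1) + f x
       = h * h * pd j (pd i f) q"
proof -
  define u :: pt where "u = axis i 1"
  define v :: pt where "v = axis j 1"
  have in_ball: "x + s *\<^sub>R u + t *\<^sub>R v \<in> ball x r" if "0 \<le> s" "s \<le> h" "0 \<le> t" "t \<le> h" for s t
    using axis_combination_in_ball[of s t r x i j] that h by (simp add: u_def v_def)
  define \<phi> where "\<phi> s = f ((x + h *\<^sub>R v) + s *\<^sub>R u) - f (x + s *\<^sub>R u)" for s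
  have d\<phi>: "(\<phi> has_real_derivative (pd i f ((x + h *\<^sub>R v) + s *\<^sub>R u) - pd i f (x + s *\<^sub>R u))) (at s)"
    if "0 \<le> s" "s \<le> h" for s
  proof -
    have "(x + h *\<^sub>R v) + s *\<^sub>R u \<in> ball x r" "x + s *\<^sub>R u \<in> ball x r"
      using in_ball[of s h] in_ball[of s 0] that h by (simp_all add: algebra_simps)
    then show ?thesis
      unfolding \<phi>_def u_def
      by (intro DERIV_diff has_real_derivative_pd_along_axis f) (simp_all add: u_def)
  qed
  obtain s1 where s1: "0 < s1" "s1 < h"
    "\<phi> h - \<phi> 0 = (h - 0) * (pd i f ((x + h *\<^sub>R v) + s1 *\<^sub>R u) - pd i f (x + s1 *\<^sub>R u))"
    using MVT2[OF h(1) d\<phi>] by auto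
  define \<psi> where "\<psi> t = pd i f ((x + s1 *\<^sub>R u) + t *\<^sub>R v)" for t
  have d\<psi>: "(\<psi> has_real_derivative pd j (pd i f) ((x + s1 *\<^sub>R u) + t *\<^sub>R v)) (at t)"
    if "0 \<le> t" "t \<le> h" for t
    unfolding \<psi>_def v_def
    by (rule has_real_derivative_pd_along_axis, rule pd_f)
      (use in_ball[of s1 t] that s1 in \<open>simp add: v_def\<close>)
  obtain t1 where t1: "0 < t1" "t1 < h"
    "\<psi> h - \<psi> 0 = (h - 0) * pd j (pd i f) ((x + s1 *\<^sub>R u) + t1 *\<^sub>R v)"
    using MVT2[OF h(1) d\<psi>] by auto
  define q where "q = (x + s1 *\<^sub>R u) + t1 *\<^sub>R v"
  have "q \<in> ball x (2 * h)"
    using axis_combination_in_ball[of s1 t1 "2 * h" x i j] s1 t1 by (simp add: q_def u_def v_def)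
  moreover have "\<psi> h - \<psi> 0 = pd i f ((x + h *\<^sub>R v) + s1 *\<^sub>R u) - pd i f (x + s1 *\<^sub>R u)"
    unfolding \<psi>_def by (simp add: add.commute add.left_commute)
  then have "\<phi> h - \<phi> 0 = h * h * pd j (pd i f) q"
    using s1(3) t1(3) unfolding q_def by simp
  then have "f (x + h *\<^sub>R v + h *\<^sub>R u) - f (x + h *\<^sub>R u) - f (x + h *\<^sub>R v) + f x = h * h * pd j (pd i f) q"
    unfolding \<phi>_def by simp
  ultimately show ?thesis unfolding u_def v_def by blast
qed

lemma mixed_partials_agree_nearby:
  fixes f :: "pt \<Rightarrow> real"
  assumes f: "\<And>y. y \<in> ball x r \<Longrightarrow> f differentiable at y"
    and pd_f: "\<And>k y. y \<in> ball x r \<Longrightarrow> pd k f differentiable at y"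
    and h: "0 < h" "2 * h < r"
  shows "\<exists>q1\<in>ball x (2 * h). \<exists>q2\<in>ball x (2 * h). pd j (pd i f) q1 = pd i (pd j f) q2"
proof -
  obtain q1 where q1: "q1 \<in> ball x (2 * h)"
    "f (x + h *\<^sub>R axis j 1 + h *\<^sub>R axis i 1) - f (x + h *\<^sub>R axis i 1) - f (x + h *\<^sub>R axis j 1) + f x
       = h * h * pd j (pd i f) q1"
    using second_difference_mvt[OF f pd_f h] by blast
  obtain q2 where q2: "q2 \<in> ball x (2 * h)"
    "f (x + h *\<^sub>R axis i 1 + h *\<^sub>R axis j 1) - f (x + h *\<^sub>R axis j 1) - f (x + h *\<^sub>R axis i 1) + f x
       = h * h * pd i (pd j f) q2"
    using second_difference_mvt[OF f pd_f h] by blast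
  have "h * h * pd j (pd i f) q1 = h * h * pd i (pd j f) q2"
    using q1(2) q2(2) by (simp add: algebra_simps)
  then have "pd j (pd i f) q1 = pd i (pd j f) q2" using h(1) by simp
  then show ?thesis using q1(1) q2(1) by blast
qed

lemma pd_commute:
  fixes f :: "pt \<Rightarrow> real"
  assumes U: "open U" and x: "x \<in> U" and C2: "Ck_on 2 U f"
  shows "pd i (pd j f) x = pd j (pd i f) x"
proof -
  obtain r where r: "r > 0" "ball x r \<subseteq> U" using U x open_contains_ball by blast
  have f: "f differentiable at y" and pd_f: "pd k f differentiable at y" if "y \<in> ball x r" for y k
    using Ck_on_2_differentiable_at[OF U C2] Ck_on_2_pd_differentiable_at[OF U C2] that r(2) by blast+
  have cont: "isCont (pd l (pd k f)) x" for k l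
  proof -
    have "continuous_on U (pd l (pd k f))" using C2 by (simp add: numeral_2_eq_2)
    then show ?thesis using continuous_on_eq_continuous_at[OF U] x by blast
  qed
  let ?a = "pd j (pd i f) x" and ?b = "pd i (pd j f) x"
  have bound: "\<bar>?a - ?b\<bar> < 2 * e" if e: "e > 0" for e
  proof -
    obtain d1 where d1: "d1 > 0" "\<And>y. dist y x < d1 \<Longrightarrow> dist (pd j (pd i f) y) ?a < e"
      using cont[where k=i and l=j] e unfolding continuous_at_eps_delta by meson
    obtain d2 where d2: "d2 > 0" "\<And>y. dist y x < d2 \<Longrightarrow> dist (pd i (pd j f) y) ?b < e"
      using cont[where k=j and l=i] e unfolding continuous_at_eps_delta by meson
    define h where "h = min r (min d1 d2) / 3"
    have h: "0 < h" "2 * h < r" "2 * h < d1" "2 * h < d2"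
      using r d1 d2 unfolding h_def by auto
    have "\<exists>q1\<in>ball x (2 * h). \<exists>q2\<in>ball x (2 * h). pd j (pd i f) q1 = pd i (pd j f) q2"
      by (rule mixed_partials_agree_nearby[of x r f, OF f pd_f h(1,2)])
    then obtain q1 q2 where q: "dist x q1 < 2 * h" "dist x q2 < 2 * h" "pd j (pd i f) q1 = pd i (pd j f) q2"
      by auto
    then have "dist (pd j (pd i f) q1) ?a < e" "dist (pd i (pd j f) q2) ?b < e"
      using d1(2)[of q1] d2(2)[of q2] h by (simp_all add: dist_commute)
    then show ?thesis using q(3) by (simp add: dist_real_def)
  qed
  show ?thesis
  proof (rule ccontr)
    assume "?b \<noteq> ?a"
    then have "\<bar>?a - ?b\<bar> / 2 > 0" by simp
    from bound[OF this] show False by simp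
  qed
qed

lemma pd_pd_bounded_linear:
  assumes "open U" "x \<in> U" "bounded_linear L" "Ck_on 2 U f"
  shows "pd a (pd b (\<lambda>z. L (f z))) x = L (pd a (pd b f) x)"
proof -
  have "pd a (pd b (\<lambda>z. L (f z))) x = pd a (\<lambda>z. L (pd b f z)) x"
    using pd_bounded_linear[OF assms(3) Ck_on_2_differentiable_at[OF assms(1,4)]]
    by (intro pd_cong_open[OF assms(1,2)]) simp
  also have "\<dots> = L (pd a (pd b f) x)"
    by (rule pd_bounded_linear[OF assms(3) Ck_on_2_pd_differentiable_at[OF assms(1,4,2)]])
  finally show ?thesis .
qed

lemma pd_commute_complex:
  fixes f :: "pt \<Rightarrow> complex"
  assumes "open U" "x \<in> U" "Ck_on 2 U f"
  shows "pd a (pd b f) x = pd b (pd a f) x"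
proof -
  have "L (pd a (pd b f) x) = L (pd b (pd a f) x)" if L: "bounded_linear (L :: complex \<Rightarrow> real)" for L
    using pd_pd_bounded_linear[OF assms(1,2) L assms(3), of a b]
      pd_pd_bounded_linear[OF assms(1,2) L assms(3), of b a]
      pd_commute[OF assms(1,2) Ck_on_bounded_linear[OF assms(1) L assms(3)], of a b]
    by simp
  from this[OF bounded_linear_Re] this[OF bounded_linear_Im] show ?thesis
    by (simp add: complex_eq_iff)
qed

section \<open>The inverse of a \<open>3 \<times> 3\<close> matrix\<close>

definition adjugate3 :: "real^3^3 \<Rightarrow> real^3^3" where
  "adjugate3 A = (\<chi> i j.
     if i = 1 then (if j = 1 then A$2$2*A$3$3 - A$2$3*A$3$2 else if j = 2 then A$1$3*A$3$2 - A$1$2*A$3$3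
                    else A$1$2*A$2$3 - A$1$3*A$2$2)
     else if i = 2 then (if j = 1 then A$2$3*A$3$1 - A$2$1*A$3$3 else if j = 2 then A$1$1*A$3$3 - A$1$3*A$3$1
                    else A$1$3*A$2$1 - A$1$1*A$2$3)
     else (if j = 1 then A$2$1*A$3$2 - A$2$2*A$3$1 else if j = 2 then A$1$2*A$3$1 - A$1$1*A$3$2
           else A$1$1*A$2$2 - A$1$2*A$2$1))"

lemma matrix_mul_adjugate3: "A ** adjugate3 A = mat (det A)"
  by (simp add: vec_eq_iff matrix_matrix_mult_def mat_def adjugate3_def forall_3 sum_3 det_3 algebra_simps)

lemma adjugate3_mul: "adjugate3 A ** A = mat (det A)"
  by (simp add: vec_eq_iff matrix_matrix_mult_def mat_def adjugate3_def forall_3 sum_3 det_3 algebra_simps)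

lemma matrix_inv_eq_adjugate3:
  assumes "det A \<noteq> 0"
  shows "matrix_inv A = (1 / det A) *\<^sub>R adjugate3 A"
proof -
  let ?B = "(1 / det A) *\<^sub>R adjugate3 A"
  have right: "A ** ?B = mat 1" and left: "?B ** A = mat 1"
    using assms by (simp_all add: matrix_scalar_ac scalar_matrix_assoc[symmetric]
        matrix_mul_adjugate3 adjugate3_mul vec_eq_iff mat_def)
  then have inv: "A ** matrix_inv A = mat 1 \<and> matrix_inv A ** A = mat 1"
    unfolding matrix_inv_def by (rule someI[where x = ?B, OF conjI])
  have "matrix_inv A = matrix_inv A ** (A ** ?B)" using right by simp
  also have "\<dots> = (matrix_inv A ** A) ** ?B" by (simp add: matrix_mul_assoc)
  finally show ?thesis using inv by simp
qed

lemma adjugate3_symmetric: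
  assumes "transpose A = A"
  shows "adjugate3 A $ i $ j = adjugate3 A $ j $ i"
proof -
  have "A $ a $ b = A $ b $ a" for a b
    using arg_cong[OF assms, of "\<lambda>M. M $ b $ a"] by (simp add: transpose_def)
  then show ?thesis
    unfolding adjugate3_def using exhaust_3[of i] exhaust_3[of j] by (auto simp: algebra_simps)
qed

section \<open>The Levi-Civita connection in a chart\<close>

locale metric_chart =
  fixes U :: "pt set" and g :: "pt \<Rightarrow> real^3^3"
  assumes pr_metric: "pr_metric U g"
begin

lemma open_domain: "open U"
  using pr_metric unfolding pr_metric_def by simp

lemma det_g_nonzero: "y \<in> U \<Longrightarrow> det (g y) \<noteq> 0"
  using pr_metric unfolding pr_metric_def by simp

lemma transpose_g: "y \<in> U \<Longrightarrow> transpose (g y) = g y"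
  using pr_metric unfolding pr_metric_def by simp

lemma g_symmetric: "y \<in> U \<Longrightarrow> g y $ a $ b = g y $ b $ a"
  using arg_cong[OF transpose_g, of y "\<lambda>M. M $ b $ a"] by (simp add: transpose_def)

lemma g_Ck_on: "Ck_on n U (\<lambda>y. g y $ a $ b)"
proof -
  have "bounded_linear (\<lambda>M::real^3^3. M $ a $ b)"
    using bounded_linear_compose[OF bounded_linear_vec_nth[of b] bounded_linear_vec_nth[of a]] by simp
  moreover have "smooth_on U g" using pr_metric unfolding pr_metric_def by simp
  ultimately show ?thesis
    using Ck_on_bounded_linear[OF open_domain _ smooth_on_imp_Ck_on] by blast
qed

lemma g_differentiable: "y \<in> U \<Longrightarrow> (\<lambda>y. g y $ a $ b) differentiable at y"
  using Ck_on_2_differentiable_at[OF open_domain g_Ck_on] .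

lemma pd_g_differentiable: "y \<in> U \<Longrightarrow> pd i (\<lambda>y. g y $ a $ b) differentiable at y"
  using Ck_on_2_pd_differentiable_at[OF open_domain g_Ck_on] .

lemma pd_g_symmetric: "y \<in> U \<Longrightarrow> pd i (\<lambda>y. g y $ a $ b) y = pd i (\<lambda>y. g y $ b $ a) y"
  by (rule pd_cong_open[OF open_domain]) (auto simp: g_symmetric)

lemma ginv_eq_adjugate3: "y \<in> U \<Longrightarrow> ginv g y = (1 / det (g y)) *\<^sub>R adjugate3 (g y)"
  using pr_metric matrix_inv_eq_adjugate3 unfolding pr_metric_def ginv_def by blast

lemma g_ginv: "y \<in> U \<Longrightarrow> (\<Sum>b\<in>UNIV. g y $ a $ b * ginv g y $ b $ c) = (if a = c then 1 else 0)"
proof -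
  assume y: "y \<in> U"
  have "g y ** ginv g y = (1 / det (g y)) *\<^sub>R (g y ** adjugate3 (g y))"
    by (simp add: ginv_eq_adjugate3[OF y] matrix_scalar_ac scalar_matrix_assoc)
  also have "\<dots> = mat 1"
    using det_g_nonzero[OF y] by (simp add: matrix_mul_adjugate3 vec_eq_iff mat_def)
  finally have "g y ** ginv g y = mat 1" .
  from arg_cong[OF this, of "\<lambda>M. M $ a $ c"] show ?thesis
    unfolding matrix_matrix_mult_def mat_def by simp
qed

lemma ginv_symmetric: "y \<in> U \<Longrightarrow> ginv g y $ a $ b = ginv g y $ b $ a"
  using adjugate3_symmetric[OF transpose_g] by (simp add: ginv_eq_adjugate3)

lemma ginv_differentiable: "y \<in> U \<Longrightarrow> (\<lambda>z. ginv g z $ i $ j) differentiable at y"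
proof -
  assume y: "y \<in> U"
  note g = g_differentiable[OF y]
  have "\<forall>i j. (\<lambda>z. adjugate3 (g z) $ i $ j) differentiable at y"
    by (simp add: forall_3 adjugate3_def g)
  moreover have "(\<lambda>z. det (g z)) differentiable at y"
    by (simp add: det_3 g)
  ultimately have "(\<lambda>z. adjugate3 (g z) $ i $ j / det (g z)) differentiable at y"
    using det_g_nonzero[OF y] by (intro differentiable_divide) auto
  then show ?thesis
    by (rule differentiable_at_cong_open[OF open_domain y, rotated]) (simp add: ginv_eq_adjugate3)
qed

lemma Chr_differentiable: "y \<in> U \<Longrightarrow> (\<lambda>z. Chr g z c a b) differentiable at y"
proof -
  assume y: "y \<in> U"
  have "(\<lambda>x. ginv g x $ c $ d * (pd a (\<lambda>y. g y $ d $ b) x + pd b (\<lambda>y. g y $ d $ a) x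
      - pd d (\<lambda>y. g y $ a $ b) x)) differentiable at y" for d
    by (intro differentiable_mult ginv_differentiable[OF y] differentiable_add differentiable_diff
        pd_g_differentiable[OF y])
  then show ?thesis
    unfolding Chr_def by (intro differentiable_divide differentiable_sum) auto
qed

lemma Chr_symmetric: "y \<in> U \<Longrightarrow> Chr g y c a b = Chr g y c b a"
  unfolding Chr_def
  by (intro arg_cong[where f="\<lambda>t. t / 2"] sum.cong refl) (simp add: pd_g_symmetric[of y _ a b])

lemma pd_Chr_symmetric: "y \<in> U \<Longrightarrow> pd e (\<lambda>z. Chr g z c a b) y = pd e (\<lambda>z. Chr g z c b a) y"
  by (rule pd_cong_open[OF open_domain]) (auto simp: Chr_symmetric)

lemma g_Chr:
  assumes y: "y \<in> U"
  shows "(\<Sum>e\<in>UNIV. g y $ b $ e * Chr g y e i a) =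
     (pd i (\<lambda>z. g z $ b $ a) y + pd a (\<lambda>z. g z $ b $ i) y - pd b (\<lambda>z. g z $ i $ a) y) / 2"
proof -
  define X where "X d = pd i (\<lambda>z. g z $ d $ a) y + pd a (\<lambda>z. g z $ d $ i) y - pd d (\<lambda>z. g z $ i $ a) y" for d
  have "(\<Sum>e\<in>UNIV. g y $ b $ e * Chr g y e i a)
      = (\<Sum>e\<in>UNIV. \<Sum>d\<in>UNIV. g y $ b $ e * ginv g y $ e $ d * X d) / 2"
    unfolding Chr_def X_def by (simp add: sum_divide_distrib sum_distrib_left mult.assoc)
  also have "\<dots> = (\<Sum>d\<in>UNIV. (\<Sum>e\<in>UNIV. g y $ b $ e * ginv g y $ e $ d) * X d) / 2"
    by (subst sum.swap) (simp add: sum_distrib_right)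
  also have "\<dots> = X b / 2"
    by (simp add: g_ginv[OF y] if_distrib if_distribR cong: if_cong)
  finally show ?thesis unfolding X_def .
qed

lemma pd_g_eq_Chr:
  assumes y: "y \<in> U"
  shows "pd i (\<lambda>z. g z $ a $ b) y = (\<Sum>e\<in>UNIV. g y $ e $ b * Chr g y e i a + g y $ a $ e * Chr g y e i b)"
proof -
  have "(\<Sum>e\<in>UNIV. g y $ e $ b * Chr g y e i a + g y $ a $ e * Chr g y e i b)
      = (\<Sum>e\<in>UNIV. g y $ b $ e * Chr g y e i a) + (\<Sum>e\<in>UNIV. g y $ a $ e * Chr g y e i b)"
    by (simp add: sum.distrib g_symmetric[OF y, of _ b])
  also have "\<dots> = pd i (\<lambda>z. g z $ a $ b) y"
    unfolding g_Chr[OF y]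
    using pd_g_symmetric[OF y, of i b a] pd_g_symmetric[OF y, of a b i] pd_g_symmetric[OF y, of b i a]
    by (simp add: field_simps)
  finally show ?thesis by simp
qed

lemma gC_commute: "y \<in> U \<Longrightarrow> gC g y u v = gC g y v u"
  unfolding gC_def by (simp add: sum_3 algebra_simps g_symmetric)

lemma smooth_on_component_Ck_on: "smooth_on U V \<Longrightarrow> Ck_on n U (\<lambda>y. V y $ c)"
  using Ck_on_bounded_linear[OF open_domain bounded_linear_vec_nth smooth_on_imp_Ck_on] by blast

lemma gC_scaleC_left: "gC g y (a *s u) v = a * gC g y u v"
  unfolding gC_def by (simp add: sum_3 algebra_simps)

lemma gC_diff_left: "gC g y (u - w) v = gC g y u v - gC g y w v"
  unfolding gC_def by (simp add: sum_3 algebra_simps)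

lemma gC_sum_left:
  fixes X :: "complex^3" and W :: "3 \<Rightarrow> complex^3"
  shows "gC g y (\<chi> c. \<Sum>a\<in>UNIV. X $ a * W a $ c) v = (\<Sum>a\<in>UNIV. X $ a * gC g y (W a) v)"
  unfolding gC_def by (simp add: sum_3 algebra_simps)

lemma gC_eq_lower: "y \<in> U \<Longrightarrow> gC g y v w = (\<Sum>b\<in>UNIV. lower g y v b * w $ b)"
  unfolding gC_def lower_def by (simp add: sum_3 algebra_simps g_symmetric)

lemma raise_lower: "y \<in> U \<Longrightarrow> v $ c = (\<Sum>d\<in>UNIV. lower g y v d * of_real (ginv g y $ d $ c))"
proof -
  assume y: "y \<in> U"
  have "(\<Sum>d\<in>UNIV. lower g y v d * of_real (ginv g y $ d $ c))
      = (\<Sum>a\<in>UNIV. v $ a * of_real (\<Sum>d\<in>UNIV. g y $ a $ d * ginv g y $ d $ c))"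
    unfolding lower_def by (simp add: sum_3 algebra_simps g_symmetric[OF y])
  also have "\<dots> = v $ c"
    by (simp add: g_ginv[OF y] if_distrib if_distribR cong: if_cong)
  finally show ?thesis by simp
qed

lemma gC_nondegenerate:
  assumes y: "y \<in> U" and v: "v \<noteq> 0"
  shows "\<exists>l. gC g y v l = 1"
proof -
  have "\<exists>i. lower g y v i \<noteq> 0"
  proof (rule ccontr)
    assume "\<nexists>i. lower g y v i \<noteq> 0"
    then have "v $ c = 0" for c using raise_lower[OF y, of v c] by simp
    then have "v = 0" by (simp add: vec_eq_iff)
    with v show False by simp
  qed
  then obtain i where i: "lower g y v i \<noteq> 0" by blast
  have "gC g y v (axis i (1 / lower g y v i)) = 1"
    unfolding gC_eq_lower[OF y] using i by (simp add: axis_def if_distrib cong: if_cong)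
  then show ?thesis by blast
qed

text \<open>In
  \<open>nabla a (nabla b V)\<close> the field \<open>nabla b V\<close> is differentiated as a vector field, so it differs
  from the tensorial \<open>\<nabla>\<^sub>a\<nabla>\<^sub>b V\<close> by \<open>\<Gamma>\<^sup>e\<^sub>a\<^sub>b \<nabla>\<^sub>e V\<close>, which is symmetric in \<open>a, b\<close> and drops
  out of commutators.\<close>

definition nabla :: "3 \<Rightarrow> (pt \<Rightarrow> complex^3) \<Rightarrow> pt \<Rightarrow> complex^3" where
  "nabla a V x = (\<chi> c. pd a (\<lambda>y. V y $ c) x + (\<Sum>b\<in>UNIV. of_real (Chr g x c a b) * V x $ b))"

definition cov_div :: "(pt \<Rightarrow> complex^3) \<Rightarrow> pt \<Rightarrow> complex" where
  "cov_div V x = (\<Sum>c\<in>UNIV. nabla c V x $ c)"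

lemma nabla_component:
  "nabla a V x $ c = pd a (\<lambda>y. V y $ c) x + (\<Sum>b\<in>UNIV. of_real (Chr g x c a b) * V x $ b)"
  by (simp add: nabla_def)

lemma covD_eq_nabla: "covD g X Y x = (\<chi> c. \<Sum>a\<in>UNIV. X x $ a * nabla a Y x $ c)"
  by (simp add: covD_def nabla_def)

lemma covD_axis: "covD g (complexify (\<lambda>_. axis a 1)) V x = nabla a V x"
  using exhaust_3[of a] by (auto simp: covD_eq_nabla complexify_def axis_def vec_eq_iff sum_3)

lemma nabla_cong_open:
  assumes "x \<in> U" "\<And>y. y \<in> U \<Longrightarrow> V y = W y"
  shows "nabla a V x = nabla a W x"
proof -
  have "pd a (\<lambda>y. V y $ c) x = pd a (\<lambda>y. W y $ c) x" for c
    by (rule pd_cong_open[OF open_domain assms(1)]) (simp add: assms(2))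
  then show ?thesis by (simp add: nabla_def assms)
qed

lemma Chr_of_real_differentiable:
  "x \<in> U \<Longrightarrow> (\<lambda>y. complex_of_real (Chr g y c a b)) differentiable at x"
  using differentiable_of_real[OF Chr_differentiable] .

lemma nabla_differentiable:
  assumes x: "x \<in> U" and V: "\<And>c. Ck_on 2 U (\<lambda>y. V y $ c)"
  shows "(\<lambda>y. nabla a V y $ c) differentiable at x"
proof -
  have "(\<lambda>y. complex_of_real (Chr g y c a b) * V y $ b) differentiable at x" for b
    by (intro differentiable_mult Chr_of_real_differentiable[OF x] Ck_on_2_differentiable_at[OF open_domain V x])
  then show ?thesis
    unfolding nabla_component
    by (intro differentiable_add differentiable_sum Ck_on_2_pd_differentiable_at[OF open_domain V x]) auto
qed

lemma pd_nabla:
  assumes x: "x \<in> U" and V: "\<And>d. (\<lambda>y. V y $ d) differentiable at x"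
    and pd_V: "pd b (\<lambda>y. V y $ c) differentiable at x"
  shows "pd a (\<lambda>y. nabla b V y $ c) x = pd a (pd b (\<lambda>y. V y $ c)) x +
    (\<Sum>d\<in>UNIV. of_real (pd a (\<lambda>y. Chr g y c b d) x) * V x $ d + of_real (Chr g x c b d) * pd a (\<lambda>y. V y $ d) x)"
proof -
  have m: "(\<lambda>y. of_real (Chr g y c b d) * V y $ d) differentiable at x" for d
    using differentiable_mult[OF Chr_of_real_differentiable[OF x] V] .
  have "pd a (\<lambda>y. nabla b V y $ c) x
      = pd a (pd b (\<lambda>y. V y $ c)) x + pd a (\<lambda>y. \<Sum>d\<in>UNIV. of_real (Chr g y c b d) * V y $ d) x"
    unfolding nabla_component using m by (intro pd_add pd_V differentiable_sum) auto
  also have "pd a (\<lambda>y. \<Sum>d\<in>UNIV. of_real (Chr g y c b d) * V y $ d) x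
      = (\<Sum>d\<in>UNIV. pd a (\<lambda>y. of_real (Chr g y c b d) * V y $ d) x)"
    using pd_sum[of UNIV "\<lambda>d y. of_real (Chr g y c b d) * V y $ d"] m by simp
  finally show ?thesis
    using pd_mult[OF Chr_of_real_differentiable[OF x] V] pd_of_real[OF Chr_differentiable[OF x]] by simp
qed

lemma ricci_identity:
  assumes x: "x \<in> U" and V: "\<And>c. Ck_on 2 U (\<lambda>y. V y $ c)"
  shows "(\<Sum>d\<in>UNIV. of_real (Riem g x a b d c) * V x $ d) = nabla a (nabla b V) x $ c - nabla b (nabla a V) x $ c"
proof -
  have "nabla a (nabla b V) x $ c - nabla b (nabla a V) x $ c =
     (pd a (\<lambda>y. nabla b V y $ c) x + (\<Sum>e\<in>UNIV. of_real (Chr g x c a e) * nabla b V x $ e))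
   - (pd b (\<lambda>y. nabla a V y $ c) x + (\<Sum>e\<in>UNIV. of_real (Chr g x c b e) * nabla a V x $ e))"
    by (simp add: nabla_component)
  also have "\<dots> = (\<Sum>d\<in>UNIV. of_real (Riem g x a b d c) * V x $ d)"
    unfolding pd_nabla[OF x Ck_on_2_differentiable_at[OF open_domain V x] Ck_on_2_pd_differentiable_at[OF open_domain V x]]
      pd_commute_complex[OF open_domain x V]
    by (simp add: nabla_component Riem_def sum_3 algebra_simps)
  finally show ?thesis by simp
qed

lemma pd_gC:
  assumes x: "x \<in> U" and V: "\<And>c. (\<lambda>y. V y $ c) differentiable at x"
    and Y: "\<And>c. (\<lambda>y. Y y $ c) differentiable at x"
  shows "pd i (\<lambda>z. gC g z (V z) (Y z)) x = gC g x (nabla i V x) (Y x) + gC g x (V x) (nabla i Y x)"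
proof -
  have g: "(\<lambda>z. complex_of_real (g z $ a $ b)) differentiable at x" for a b
    using differentiable_of_real[OF g_differentiable[OF x]] .
  have gV: "(\<lambda>z. complex_of_real (g z $ a $ b) * V z $ a) differentiable at x" for a b
    using differentiable_mult[OF g V] .
  have gVY: "(\<lambda>z. complex_of_real (g z $ a $ b) * V z $ a * Y z $ b) differentiable at x" for a b
    using differentiable_mult[OF gV Y] .
  have "pd i (\<lambda>z. gC g z (V z) (Y z)) x
      = (\<Sum>a\<in>UNIV. \<Sum>b\<in>UNIV. pd i (\<lambda>z. complex_of_real (g z $ a $ b) * V z $ a * Y z $ b) x)"
    unfolding gC_def using gVY
    by (simp add: pd_sum differentiable_sum)
  also have "\<dots> = (\<Sum>a\<in>UNIV. \<Sum>b\<in>UNIV.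
      (of_real (pd i (\<lambda>z. g z $ a $ b) x) * V x $ a + of_real (g x $ a $ b) * pd i (\<lambda>z. V z $ a) x) * Y x $ b
      + of_real (g x $ a $ b) * V x $ a * pd i (\<lambda>z. Y z $ b) x)"
    using pd_mult[OF gV Y] pd_mult[OF g V] pd_of_real[OF g_differentiable[OF x]] by simp
  also have "\<dots> = gC g x (nabla i V x) (Y x) + gC g x (V x) (nabla i Y x)"
    unfolding pd_g_eq_Chr[OF x] gC_def nabla_component
    by (simp add: sum_3 algebra_simps g_symmetric[OF x])
  finally show ?thesis .
qed

lemma cov_div_scale:
  assumes x: "x \<in> U" and f: "f differentiable at x" and V: "\<And>c. (\<lambda>y. V y $ c) differentiable at x"
  shows "cov_div (\<lambda>y. f y *s V y) x = (\<Sum>c\<in>UNIV. V x $ c * pd c f x) + f x * cov_div V x"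
  using pd_mult[OF f V]
  by (simp add: cov_div_def nabla_component sum.distrib sum_distrib_left algebra_simps)


lemma cov_div_covD:
  assumes x: "x \<in> U" and X: "\<And>c. (\<lambda>y. X y $ c) differentiable at x"
    and Y: "\<And>a c. (\<lambda>y. nabla a Y y $ c) differentiable at x"
  shows "cov_div (covD g X Y) x
       = (\<Sum>a\<in>UNIV. \<Sum>c\<in>UNIV. pd c (\<lambda>y. X y $ a) x * nabla a Y x $ c) + (\<Sum>a\<in>UNIV. X x $ a * cov_div (nabla a Y) x)"
proof -
  define \<Gamma> where "\<Gamma> c a e = complex_of_real (Chr g x c a e)" for c a e
  have lhs: "cov_div (covD g X Y) x = (\<Sum>c\<in>UNIV. pd c (\<lambda>y. \<Sum>a\<in>UNIV. X y $ a * nabla a Y y $ c) x)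
      + (\<Sum>c\<in>UNIV. \<Sum>e\<in>UNIV. \<Gamma> c c e * (\<Sum>a\<in>UNIV. X x $ a * nabla a Y x $ e))"
    unfolding cov_div_def nabla_def[of _ "covD g X Y"] covD_eq_nabla \<Gamma>_def by (simp add: sum.distrib)
  have pd_XY: "pd c (\<lambda>y. \<Sum>a\<in>UNIV. X y $ a * nabla a Y y $ c) x
      = (\<Sum>a\<in>UNIV. pd c (\<lambda>y. X y $ a) x * nabla a Y x $ c + X x $ a * pd c (\<lambda>y. nabla a Y y $ c) x)" for c
    using X Y by (simp add: pd_sum pd_mult differentiable_mult)
  have rhs: "cov_div (nabla a Y) x
      = (\<Sum>c\<in>UNIV. pd c (\<lambda>y. nabla a Y y $ c) x) + (\<Sum>c\<in>UNIV. \<Sum>e\<in>UNIV. \<Gamma> c c e * nabla a Y x $ e)" for a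
    unfolding cov_div_def nabla_def[of _ "nabla a Y"] \<Gamma>_def by (simp add: sum.distrib)
  show ?thesis unfolding lhs pd_XY rhs by (simp add: sum_3 algebra_simps)
qed

end

section \<open>Curvature\<close>

lemma pair_symmetry_of_curvature:
  fixes R :: "'i \<Rightarrow> 'i \<Rightarrow> 'i \<Rightarrow> 'i \<Rightarrow> real"
  assumes antisym12: "\<And>a b d c. R a b d c = - R b a d c"
    and antisym34: "\<And>a b d c. R a b d c = - R a b c d"
    and bianchi: "\<And>a b d c. R a b d c + R b d a c + R d a b c = 0"
  shows "R a b c d = R c d a b"
  using bianchi[of a b c d] bianchi[of b c d a] bianchi[of c d a b] bianchi[of d a b c]
    antisym34[of a b c d] antisym34[of c d a b] antisym34[of b c a d] antisym34[of d a b c]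
    antisym12[of c a b d] antisym34[of a c d b] antisym12[of d b c a] antisym34[of b d a c]
  by linarith

context metric_chart
begin

definition Riem_low :: "pt \<Rightarrow> 3 \<Rightarrow> 3 \<Rightarrow> 3 \<Rightarrow> 3 \<Rightarrow> real" where
  "Riem_low x a b d c = (\<Sum>e\<in>UNIV. Riem g x a b d e * g x $ e $ c)"

lemma Riem_antisym: "Riem g x a b d c = - Riem g x b a d c"
  by (simp add: Riem_def sum_3 algebra_simps)

lemma Riem_first_bianchi:
  "x \<in> U \<Longrightarrow> Riem g x a b d c + Riem g x b d a c + Riem g x d a b c = 0"
  by (simp add: Riem_def sum_3 Chr_symmetric pd_Chr_symmetric algebra_simps)

text \<open>The antisymmetry of \<open>R\<^sub>a\<^sub>b\<^sub>d\<^sub>c\<close> in its last two indices comes from metric compatibility: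
  writing \<open>\<partial>\<^sub>b g\<^sub>d\<^sub>c\<close> through Christoffel symbols and differentiating once more, the sum
  \<open>R\<^sub>a\<^sub>b\<^sub>d\<^sub>c + R\<^sub>a\<^sub>b\<^sub>c\<^sub>d\<close> becomes \<open>\<partial>\<^sub>a\<partial>\<^sub>b g\<^sub>d\<^sub>c - \<partial>\<^sub>b\<partial>\<^sub>a g\<^sub>d\<^sub>c = 0\<close>.\<close>

lemma Riem_low_antisym34:
  assumes x: "x \<in> U"
  shows "Riem_low x a b d c = - Riem_low x a b c d"
proof -
  define F where "F b' y = (\<Sum>e\<in>UNIV. g y $ e $ c * Chr g y e b' d + g y $ d $ e * Chr g y e b' c)" for b' y
  have pd_pd_g: "pd a' (pd b' (\<lambda>z. g z $ d $ c)) x = pd a' (F b') x" for a' b'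
    by (rule pd_cong_open[OF open_domain x]) (simp add: F_def pd_g_eq_Chr)
  have gChr: "(\<lambda>y. g y $ i $ j * Chr g y e b' l) differentiable at x" for i j e b' l
    using differentiable_mult[OF g_differentiable[OF x] Chr_differentiable[OF x]] .
  have pd_F: "pd a' (F b') x = (\<Sum>e\<in>UNIV.
         pd a' (\<lambda>z. g z $ e $ c) x * Chr g x e b' d + g x $ e $ c * pd a' (\<lambda>z. Chr g z e b' d) x
       + (pd a' (\<lambda>z. g z $ d $ e) x * Chr g x e b' c + g x $ d $ e * pd a' (\<lambda>z. Chr g z e b' c) x))" for a' b'
    unfolding F_def
    using gChr by (simp add: pd_sum differentiable_add pd_add pd_mult g_differentiable[OF x] Chr_differentiable[OF x])
  have "Riem_low x a b d c + Riem_low x a b c d = pd a (F b) x - pd b (F a) x"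
    unfolding Riem_low_def pd_F
    by (simp add: pd_g_eq_Chr[OF x] Riem_def sum_3 algebra_simps g_symmetric[OF x])
  also have "\<dots> = 0"
    using pd_pd_g[of a b] pd_pd_g[of b a] pd_commute[OF open_domain x g_Ck_on, of a b d c] by simp
  finally show ?thesis by (simp add: eq_neg_iff_add_eq_0)
qed

lemma Riem_low_pair_symmetric:
  assumes x: "x \<in> U"
  shows "Riem_low x a b c d = Riem_low x c d a b"
proof -
  have "Riem_low x a b d c = - Riem_low x b a d c" for a b d c
    unfolding Riem_low_def by (subst Riem_antisym) (simp add: sum_negf)
  moreover have "Riem_low x a b d c + Riem_low x b d a c + Riem_low x d a b c = 0" for a b d c
    using Riem_first_bianchi[OF x]
    by (simp add: Riem_low_def sum.distrib[symmetric] distrib_right[symmetric])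
  ultimately show ?thesis
    using pair_symmetry_of_curvature[of "Riem_low x"] Riem_low_antisym34[OF x] by blast
qed

lemma Riem_eq_Riem_low_ginv:
  assumes x: "x \<in> U"
  shows "Riem g x a b d c = (\<Sum>f\<in>UNIV. Riem_low x a b d f * ginv g x $ f $ c)"
proof -
  have "(\<Sum>f\<in>UNIV. Riem_low x a b d f * ginv g x $ f $ c)
      = (\<Sum>e\<in>UNIV. Riem g x a b d e * (\<Sum>f\<in>UNIV. g x $ e $ f * ginv g x $ f $ c))"
    unfolding Riem_low_def by (simp add: sum_3 algebra_simps)
  also have "\<dots> = Riem g x a b d c"
    by (simp add: g_ginv[OF x] if_distrib if_distribR cong: if_cong)
  finally show ?thesis by simp
qed

lemma Ric_quadratic_eq_nabla_commutator:
  assumes x: "x \<in> U" and V: "\<And>c. Ck_on 2 U (\<lambda>y. V y $ c)"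
  shows "(\<Sum>a\<in>UNIV. \<Sum>b\<in>UNIV. V x $ a * V x $ b * of_real (Ric g x a b))
       = (\<Sum>a\<in>UNIV. V x $ a * (\<Sum>c\<in>UNIV. nabla a (nabla c V) x $ c)) - (\<Sum>a\<in>UNIV. V x $ a * cov_div (nabla a V) x)"
proof -
  have "(\<Sum>a\<in>UNIV. \<Sum>b\<in>UNIV. V x $ a * V x $ b * of_real (Ric g x a b))
      = (\<Sum>a\<in>UNIV. V x $ a * (\<Sum>c\<in>UNIV. \<Sum>d\<in>UNIV. of_real (Riem g x a c d c) * V x $ d))"
    unfolding Ric_def by (simp add: sum_3 algebra_simps)
  then show ?thesis
    unfolding ricci_identity[OF x V] cov_div_def by (simp add: sum_subtractf right_diff_distrib)
qed

lemma contracted_ricci_identity: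
  assumes x: "x \<in> U" and V: "\<And>c. Ck_on 2 U (\<lambda>y. V y $ c)"
  shows "(\<Sum>a\<in>UNIV. \<Sum>b\<in>UNIV. V x $ a * V x $ b * of_real (Ric g x a b))
       = (\<Sum>a\<in>UNIV. V x $ a * pd a (cov_div V) x) - cov_div (covD g V V) x
         + (\<Sum>a\<in>UNIV. \<Sum>c\<in>UNIV. nabla a V x $ c * nabla c V x $ a)"
proof -
  define B where "B a c = nabla a V x $ c" for a c
  define dV where "dV a c = pd a (\<lambda>y. V y $ c) x" for a c
  define \<Gamma> where "\<Gamma> c a e = complex_of_real (Chr g x c a e)" for c a e
  have \<Gamma>_V: "(\<Sum>e\<in>UNIV. \<Gamma> c a e * V x $ e) = B a c - dV a c" for a c
    unfolding B_def dV_def \<Gamma>_def by (simp add: nabla_component)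
  have "(\<Sum>c\<in>UNIV. nabla a (nabla c V) x $ c) = pd a (cov_div V) x + (\<Sum>c\<in>UNIV. \<Sum>e\<in>UNIV. \<Gamma> c a e * B c e)" for a
    unfolding cov_div_def[abs_def] nabla_def[of a "nabla _ V"] \<Gamma>_def B_def
    using nabla_differentiable[OF x V] by (simp add: pd_sum sum.distrib)
  moreover have "cov_div (covD g V V) x = (\<Sum>a\<in>UNIV. \<Sum>c\<in>UNIV. dV c a * B a c) + (\<Sum>a\<in>UNIV. V x $ a * cov_div (nabla a V) x)"
    unfolding dV_def B_def
    using cov_div_covD[OF x Ck_on_2_differentiable_at[OF open_domain V x] nabla_differentiable[OF x V]] .
  moreover have "(\<Sum>a\<in>UNIV. V x $ a * (\<Sum>c\<in>UNIV. \<Sum>e\<in>UNIV. \<Gamma> c a e * B c e))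
      = (\<Sum>c\<in>UNIV. \<Sum>e\<in>UNIV. (B e c - dV e c) * B c e)"
    unfolding \<Gamma>_V[symmetric] using Chr_symmetric[OF x] by (simp add: \<Gamma>_def sum_3 algebra_simps)
  ultimately show ?thesis
    unfolding Ric_quadratic_eq_nabla_commutator[OF x V] B_def[symmetric]
    by (simp add: sum_3 algebra_simps)
qed

end

section \<open>Pointwise linear algebra of a null covector\<close>

text \<open>Throughout, \<open>K\<close> is the covector \<open>k\<^sub>a\<close>, \<open>Gm\<close> the inverse metric, \<open>k = Gm K\<close>, and \<open>l\<close> a
  vector with \<open>k\<^sub>a l\<^sup>a = 1\<close>; the condition \<open>\<Sum>d. K d * Z d = 0\<close> says \<open>Z \<in> k\<^sup>\<bottom>\<close>.\<close>

lemma vanishing_on_kernel_imp_multiple: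
  fixes K l P :: "3 \<Rightarrow> complex"
  assumes Kl: "(\<Sum>d\<in>UNIV. K d * l d) = 1"
    and P: "\<And>Z. (\<Sum>d\<in>UNIV. K d * Z d) = 0 \<Longrightarrow> (\<Sum>d\<in>UNIV. P d * Z d) = 0"
  shows "P a = K a * (\<Sum>d\<in>UNIV. P d * l d)"
proof -
  define Z where "Z i = (if i = a then 1 else 0) - K a * l i" for i
  have "(\<Sum>d\<in>UNIV. K d * Z d) = K a - K a * (\<Sum>d\<in>UNIV. K d * l d)"
    unfolding Z_def using exhaust_3[of a] by (auto simp: sum_3 algebra_simps)
  then have "(\<Sum>d\<in>UNIV. P d * Z d) = 0" using Kl P by simp
  moreover have "(\<Sum>d\<in>UNIV. P d * Z d) = P a - K a * (\<Sum>d\<in>UNIV. P d * l d)"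
    unfolding Z_def using exhaust_3[of a] by (auto simp: sum_3 algebra_simps)
  ultimately show ?thesis by simp
qed

lemma bilinear_vanishing_on_kernel_decomp:
  fixes M :: "3 \<Rightarrow> 3 \<Rightarrow> complex" and K l :: "3 \<Rightarrow> complex"
  assumes Kl: "(\<Sum>d\<in>UNIV. K d * l d) = 1"
    and M: "\<And>X Y. (\<Sum>d\<in>UNIV. K d * X d) = 0 \<Longrightarrow> (\<Sum>d\<in>UNIV. K d * Y d) = 0 \<Longrightarrow>
               (\<Sum>a\<in>UNIV. X a * (\<Sum>d\<in>UNIV. M a d * Y d)) = 0"
  shows "\<exists>\<mu> \<nu>. \<forall>a d. M a d = K a * \<mu> d + \<nu> a * K d"
proof -
  define \<mu> where "\<mu> d = (\<Sum>i\<in>UNIV. l i * M i d)" for d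
  define \<nu> where "\<nu> a = (\<Sum>j\<in>UNIV. (M a j - K a * \<mu> j) * l j)" for a
  have M_Y: "(\<Sum>d\<in>UNIV. M a d * Y d) = K a * (\<Sum>d\<in>UNIV. \<mu> d * Y d)"
    if Y: "(\<Sum>d\<in>UNIV. K d * Y d) = 0" for a Y
  proof -
    have "(\<Sum>d\<in>UNIV. M a d * Y d) = K a * (\<Sum>i\<in>UNIV. (\<Sum>d\<in>UNIV. M i d * Y d) * l i)"
      by (rule vanishing_on_kernel_imp_multiple[OF Kl, of "\<lambda>i. \<Sum>d\<in>UNIV. M i d * Y d"])
         (use M[OF _ Y] in \<open>simp add: mult.commute\<close>)
    then show ?thesis unfolding \<mu>_def by (simp add: sum_3 algebra_simps)
  qed
  have "M a d = K a * \<mu> d + \<nu> a * K d" for a d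
  proof -
    have "M a d - K a * \<mu> d = K d * \<nu> a"
      unfolding \<nu>_def
    proof (rule vanishing_on_kernel_imp_multiple[OF Kl])
      fix Z assume Z: "(\<Sum>d\<in>UNIV. K d * Z d) = 0"
      have "(\<Sum>d\<in>UNIV. (M a d - K a * \<mu> d) * Z d) = (\<Sum>d\<in>UNIV. M a d * Z d) - K a * (\<Sum>d\<in>UNIV. \<mu> d * Z d)"
        by (simp add: sum_3 algebra_simps)
      then show "(\<Sum>d\<in>UNIV. (M a d - K a * \<mu> d) * Z d) = 0" using M_Y[OF Z, of a] by simp
    qed
    then show ?thesis by (simp add: algebra_simps)
  qed
  then show ?thesis by blast
qed

text \<open>For \<open>\<nabla>\<^sub>a k\<^sub>b = k\<^sub>a \<mu>\<^sub>b + \<nu>\<^sub>a k\<^sub>b\<close> with \<open>k\<close> null and \<open>\<nabla>\<^sub>a k\<^sub>b k\<^sup>b = 0\<close>, the vector \<open>\<mu>\<close> is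
  orthogonal to \<open>k\<close>, so \<open>k\<close> is geodesic with \<open>k\<^sup>a \<nabla>\<^sub>a k\<^sup>c = \<theta> k\<^sup>c\<close> where \<open>\<theta> = \<nabla>\<^sub>a k\<^sup>a = \<nu>\<^sub>a k\<^sup>a\<close>, and the
  trace of the square of \<open>\<nabla>k\<close> is \<open>\<theta>\<^sup>2\<close>.\<close>

lemma decomposed_derivative_trace_identities:
  fixes M Gm :: "3 \<Rightarrow> 3 \<Rightarrow> complex" and K k l \<mu> \<nu> :: "3 \<Rightarrow> complex" and B :: "3 \<Rightarrow> 3 \<Rightarrow> complex"
  assumes B: "\<And>a c. B a c = (\<Sum>d\<in>UNIV. M a d * Gm d c)"
    and M: "\<And>a d. M a d = K a * \<mu> d + \<nu> a * K d"
    and k: "\<And>c. k c = (\<Sum>d\<in>UNIV. K d * Gm d c)"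
    and Gm_sym: "\<And>a b. Gm a b = Gm b a"
    and Kk: "(\<Sum>d\<in>UNIV. K d * k d) = 0"
    and Kl: "(\<Sum>d\<in>UNIV. K d * l d) = 1"
    and Mk: "\<And>a. (\<Sum>d\<in>UNIV. M a d * k d) = 0"
  shows "(\<Sum>a\<in>UNIV. k a * B a c) = (\<Sum>a\<in>UNIV. B a a) * k c"
    and "(\<Sum>a\<in>UNIV. \<Sum>c\<in>UNIV. B a c * B c a) = (\<Sum>a\<in>UNIV. B a a)^2"
proof -
  have "\<exists>a. K a \<noteq> 0"
  proof (rule ccontr)
    assume "\<nexists>a. K a \<noteq> 0"
    then have "(\<Sum>d\<in>UNIV. K d * l d) = 0" by simp
    with Kl show False by simp
  qed
  then obtain a where "K a \<noteq> 0" by blast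
  moreover have "(\<Sum>d\<in>UNIV. M a d * k d) = K a * (\<Sum>d\<in>UNIV. \<mu> d * k d) + \<nu> a * (\<Sum>d\<in>UNIV. K d * k d)"
    by (simp add: M sum_3 algebra_simps)
  then have "K a * (\<Sum>d\<in>UNIV. \<mu> d * k d) = 0"
    using Mk[of a] Kk by simp
  ultimately have \<mu>k: "(\<Sum>d\<in>UNIV. \<mu> d * k d) = 0" by simp
  define \<mu>' where "\<mu>' c = (\<Sum>d\<in>UNIV. \<mu> d * Gm d c)" for c
  have B_eq: "B a c = K a * \<mu>' c + \<nu> a * k c" for a c
    unfolding B M \<mu>'_def k by (simp add: sum_3 algebra_simps)
  have K\<mu>': "(\<Sum>a\<in>UNIV. K a * \<mu>' a) = 0"
    using \<mu>k unfolding \<mu>'_def k by (simp add: sum_3 algebra_simps Gm_sym)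
  have trace: "(\<Sum>a\<in>UNIV. B a a) = (\<Sum>a\<in>UNIV. \<nu> a * k a)"
    using K\<mu>' unfolding B_eq by (simp add: sum.distrib)
  have "(\<Sum>a\<in>UNIV. k a * B a c) = (\<Sum>a\<in>UNIV. K a * k a) * \<mu>' c + (\<Sum>a\<in>UNIV. \<nu> a * k a) * k c"
    unfolding B_eq by (simp add: sum_3 algebra_simps)
  then show "(\<Sum>a\<in>UNIV. k a * B a c) = (\<Sum>a\<in>UNIV. B a a) * k c"
    using Kk trace by (simp add: mult.commute)
  have "(\<Sum>a\<in>UNIV. \<Sum>c\<in>UNIV. B a c * B c a) = (\<Sum>a\<in>UNIV. K a * \<mu>' a)^2
      + 2 * (\<Sum>a\<in>UNIV. K a * k a) * (\<Sum>a\<in>UNIV. \<nu> a * \<mu>' a) + (\<Sum>a\<in>UNIV. \<nu> a * k a)^2"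
    unfolding B_eq by (simp add: sum_3 power2_eq_square algebra_simps)
  then show "(\<Sum>a\<in>UNIV. \<Sum>c\<in>UNIV. B a c * B c a) = (\<Sum>a\<in>UNIV. B a a)^2"
    using K\<mu>' Kk trace by (simp add: mult.commute)
qed

text \<open>If \<open>R\<^sub>a\<^sub>b\<^sub>d\<^sub>c k\<^sup>d\<close> annihilates \<open>k\<^sup>\<bottom>\<close> in \<open>c\<close>, then \<open>R\<^sub>a\<^sub>b\<^sub>d\<^sub>c k\<^sup>d = F\<^sub>a\<^sub>b k\<^sub>c\<close>; the pair symmetry
  turns this into \<open>R\<^sub>c\<^sub>e\<^sub>a\<^sub>f k\<^sup>c\<close> annihilating \<open>k\<^sup>\<bottom>\<close> in \<open>a\<close> after contraction, so \<open>k\<^sup>c R\<^sub>c\<^sub>a\<close> is a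
  multiple of \<open>k\<^sub>a\<close>.\<close>

lemma aligned_curvature_imp_aligned_ricci:
  fixes R Rl :: "3 \<Rightarrow> 3 \<Rightarrow> 3 \<Rightarrow> 3 \<Rightarrow> complex" and Gm :: "3 \<Rightarrow> 3 \<Rightarrow> complex" and K k l :: "3 \<Rightarrow> complex"
  assumes R: "\<And>a b d c. R a b d c = (\<Sum>f\<in>UNIV. Rl a b d f * Gm f c)"
    and pair: "\<And>a b c d. Rl a b c d = Rl c d a b"
    and antisym34: "\<And>a b d c. Rl a b d c = - Rl a b c d"
    and k: "\<And>c. k c = (\<Sum>d\<in>UNIV. K d * Gm d c)"
    and Gm_sym: "\<And>a b. Gm a b = Gm b a"
    and Kl: "(\<Sum>d\<in>UNIV. K d * l d) = 1"
    and aligned: "\<And>a b Z. (\<Sum>d\<in>UNIV. K d * Z d) = 0 \<Longrightarrow> (\<Sum>c\<in>UNIV. (\<Sum>d\<in>UNIV. Rl a b d c * k d) * Z c) = 0"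
  shows "(\<Sum>c\<in>UNIV. k c * (\<Sum>e\<in>UNIV. R c e a e)) * K b = (\<Sum>c\<in>UNIV. k c * (\<Sum>e\<in>UNIV. R c e b e)) * K a"
proof -
  define P where "P a b c = (\<Sum>d\<in>UNIV. Rl a b d c * k d)" for a b c
  define F where "F a b = (\<Sum>c\<in>UNIV. P a b c * l c)" for a b
  have P_eq: "P a b c = K c * F a b" for a b c
    unfolding F_def by (rule vanishing_on_kernel_imp_multiple[OF Kl]) (use aligned in \<open>simp add: P_def\<close>)
  define \<rho> where "\<rho> a = (\<Sum>f\<in>UNIV. F a f * k f)" for a
  have ricci: "(\<Sum>c\<in>UNIV. k c * (\<Sum>e\<in>UNIV. R c e a e)) = \<rho> a" for a
  proof -
    have "(\<Sum>c\<in>UNIV. k c * (\<Sum>e\<in>UNIV. R c e a e)) = (\<Sum>e\<in>UNIV. \<Sum>f\<in>UNIV. Gm f e * P a f e)"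
      unfolding R P_def by (simp add: sum_3 algebra_simps pair)
    also have "\<dots> = \<rho> a"
      unfolding P_eq \<rho>_def k by (simp add: sum_3 algebra_simps Gm_sym)
    finally show ?thesis .
  qed
  have kP: "(\<Sum>f\<in>UNIV. k f * P a f c) = - (\<Sum>d\<in>UNIV. k d * P d c a)" for a c
  proof -
    have "Rl a f d c = - Rl d c f a" for f d
      using pair[of a f d c] antisym34[of d c a f] by simp
    then show ?thesis unfolding P_def by (simp add: sum_3 algebra_simps)
  qed
  have "(\<Sum>a\<in>UNIV. \<rho> a * Z a) = 0" if Z: "(\<Sum>d\<in>UNIV. K d * Z d) = 0" for Z
  proof -
    have "(\<Sum>a\<in>UNIV. \<rho> a * Z a) = (\<Sum>a\<in>UNIV. Z a * (\<Sum>c\<in>UNIV. l c * (\<Sum>f\<in>UNIV. k f * P a f c)))"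
      unfolding \<rho>_def F_def by (simp add: sum_3 algebra_simps)
    also have "\<dots> = (\<Sum>a\<in>UNIV. Z a * (\<Sum>c\<in>UNIV. l c * - (\<Sum>d\<in>UNIV. k d * P d c a)))"
      by (simp only: kP)
    also have "\<dots> = - (\<Sum>d\<in>UNIV. \<Sum>c\<in>UNIV. k d * l c * F d c) * (\<Sum>a\<in>UNIV. K a * Z a)"
      unfolding P_eq by (simp add: sum_3 algebra_simps)
    finally show ?thesis using Z by simp
  qed
  then have "\<rho> a = K a * (\<Sum>d\<in>UNIV. \<rho> d * l d)" for a
    by (rule vanishing_on_kernel_imp_multiple[OF Kl])
  from this[of a] this[of b] show ?thesis unfolding ricci by (simp add: algebra_simps)
qed

section \<open>Null structures\<close>

locale null_chart = metric_chart +
  fixes k :: "pt \<Rightarrow> complex^3"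
  assumes null_generator: "null_generator U g k"
begin

lemma k_smooth: "smooth_on U k"
  using null_generator unfolding null_generator_def by simp

lemma k_null: "y \<in> U \<Longrightarrow> gC g y (k y) (k y) = 0"
  using null_generator unfolding null_generator_def by simp

lemma k_Ck_on: "Ck_on n U (\<lambda>y. k y $ c)"
  using smooth_on_component_Ck_on[OF k_smooth] .

lemma k_differentiable: "x \<in> U \<Longrightarrow> (\<lambda>y. k y $ c) differentiable at x"
  using Ck_on_2_differentiable_at[OF open_domain k_Ck_on] .

lemma exists_dual_to_k: "y \<in> U \<Longrightarrow> \<exists>l. gC g y (k y) l = 1"
  using gC_nondegenerate null_generator unfolding null_generator_def by blast

lemma sec_N_k: "sec_N U k k"
  unfolding sec_N_def using k_smooth by (metis vector_smult_lid)

lemma gC_k_Ck_on: "Ck_on n U (\<lambda>y. gC g y (k y) w)"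
proof -
  have "Ck_on n U (\<lambda>y. complex_of_real (g y $ a $ b))" for a b
    using Ck_on_bounded_linear[OF open_domain bounded_linear_of_real g_Ck_on] .
  then have "Ck_on n U (\<lambda>y. complex_of_real (g y $ a $ b) * k y $ a * w $ b)" for a b
    by (intro Ck_on_bounded_bilinear[OF open_domain bounded_bilinear_mult] k_Ck_on Ck_on_const)
  then show ?thesis
    unfolding gC_def by (intro Ck_on_sum[OF open_domain]) auto
qed

text \<open>A vector \<open>v \<in> k(x)\<^sup>\<bottom>\<close> extends to the section \<open>g(k, l) v - g(k, v) l\<close> of \<open>\<N>\<^sup>\<bottom>\<close>, where
  \<open>g(k(x), l) = 1\<close>.\<close>

lemma exists_Nperp_extension:
  assumes x: "x \<in> U" and v: "gC g x (k x) v = 0"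
  shows "\<exists>Y. sec_Nperp U g k Y \<and> Y x = v"
proof -
  obtain l where l: "gC g x (k x) l = 1" using exists_dual_to_k[OF x] by blast
  define Y where "Y y = gC g y (k y) l *s v - gC g y (k y) v *s l" for y
  have "smooth_on U Y"
    unfolding smooth_on_def
  proof
    fix n
    have "linear (\<lambda>c::complex. c *s w)" for w :: "complex^3"
      by (simp add: linear_iff vec_eq_iff vector_scalar_mult_def algebra_simps)
    then have scale: "bounded_linear (\<lambda>c::complex. c *s w)" for w :: "complex^3"
      using linear_conv_bounded_linear by blast
    have "Ck_on n U (\<lambda>y. (\<lambda>c. c *s v) (gC g y (k y) l) + (\<lambda>c. c *s (- l)) (gC g y (k y) v))"
      by (intro Ck_on_add[OF open_domain] Ck_on_bounded_linear[OF open_domain scale gC_k_Ck_on])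
    moreover have "(\<lambda>y. (\<lambda>c. c *s v) (gC g y (k y) l) + (\<lambda>c. c *s (- l)) (gC g y (k y) v)) = Y"
      by (rule ext) (simp add: Y_def vec_eq_iff vector_scalar_mult_def)
    ultimately show "Ck_on n U Y" by simp
  qed
  moreover have "gC g y (Y y) (k y) = 0" if "y \<in> U" for y
    unfolding Y_def gC_diff_left gC_scaleC_left
    using gC_commute[OF that, of v "k y"] gC_commute[OF that, of l "k y"] by simp
  moreover have "Y x = v"
    using l v by (simp add: Y_def vec_eq_iff vector_scalar_mult_def)
  ultimately show ?thesis unfolding sec_Nperp_def by blast
qed

lemma nabla_k_differentiable: "x \<in> U \<Longrightarrow> (\<lambda>y. nabla a k y $ c) differentiable at x"
  using nabla_differentiable[OF _ k_Ck_on] .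

lemma nabla_k_perp_k: "z \<in> U \<Longrightarrow> gC g z (nabla a k z) (k z) = 0"
proof -
  assume z: "z \<in> U"
  have "pd a (\<lambda>y. gC g y (k y) (k y)) z = 0"
    by (rule pd_eq_0_if_vanishing_on_open[OF open_domain z]) (simp add: k_null)
  then have "gC g z (nabla a k z) (k z) + gC g z (k z) (nabla a k z) = 0"
    using pd_gC[OF z k_differentiable[OF z] k_differentiable[OF z], of a] by simp
  then show ?thesis using gC_commute[OF z, of "k z" "nabla a k z"] by simp
qed

text \<open>Extending \<open>X, Y \<in> k(z)\<^sup>\<bottom>\<close> to sections of \<open>\<N>\<^sup>\<bottom>\<close> and differentiating \<open>g(Y, k) = 0\<close> turns
  \<open>g(\<nabla>\<^sub>X Y, k) = 0\<close> into \<open>g(\<nabla>\<^sub>X k, Y) = 0\<close>.\<close>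

lemma co_geodetic_nabla_k_vanishes_on_perp:
  assumes cg: "co_geodetic U g k" and z: "z \<in> U"
    and X: "gC g z (k z) X = 0" and Y: "gC g z (k z) Y = 0"
  shows "(\<Sum>a\<in>UNIV. X $ a * gC g z (nabla a k z) Y) = 0"
proof -
  obtain Xf where Xf: "sec_Nperp U g k Xf" "Xf z = X"
    using exists_Nperp_extension[OF z X] by blast
  obtain Yf where Yf: "sec_Nperp U g k Yf" "Yf z = Y"
    using exists_Nperp_extension[OF z Y] by blast
  have Yf_diff: "(\<lambda>y. Yf y $ c) differentiable at z" for c
    using Yf(1) smooth_on_component_Ck_on Ck_on_2_differentiable_at[OF open_domain _ z]
    unfolding sec_Nperp_def by blast
  have "gC g z (nabla a Yf z) (k z) = - gC g z (nabla a k z) Y" for a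
  proof -
    have "pd a (\<lambda>y. gC g y (Yf y) (k y)) z = 0"
      using Yf(1) unfolding sec_Nperp_def by (intro pd_eq_0_if_vanishing_on_open[OF open_domain z]) simp
    then show ?thesis
      using pd_gC[OF z Yf_diff k_differentiable[OF z], of a] gC_commute[OF z, of Y "nabla a k z"] Yf(2)
      by (simp add: eq_neg_iff_add_eq_0)
  qed
  moreover have "gC g z (covD g Xf Yf z) (k z) = 0"
    using cg Xf(1) Yf(1) sec_N_k z unfolding co_geodetic_def by blast
  ultimately show ?thesis
    unfolding covD_eq_nabla gC_sum_left Xf(2) by (simp add: sum_negf)
qed

lemma co_geodetic_pointwise:
  assumes cg: "co_geodetic U g k" and z: "z \<in> U"
  shows "(\<Sum>a\<in>UNIV. k z $ a * nabla a k z $ c) = cov_div k z * k z $ c"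
    and "(\<Sum>a\<in>UNIV. \<Sum>c\<in>UNIV. nabla a k z $ c * nabla c k z $ a) = (cov_div k z)^2"
proof -
  obtain l where l: "gC g z (k z) l = 1" using exists_dual_to_k[OF z] by blast
  define K where "K = lower g z (k z)"
  define M where "M a d = lower g z (nabla a k z) d" for a d
  define Gm where "Gm d c = complex_of_real (ginv g z $ d $ c)" for d c
  have gC_nabla: "gC g z (nabla a k z) w = (\<Sum>d\<in>UNIV. M a d * w $ d)" for a w
    unfolding M_def using gC_eq_lower[OF z] .
  have gC_k: "gC g z (k z) w = (\<Sum>d\<in>UNIV. K d * w $ d)" for w
    unfolding K_def using gC_eq_lower[OF z] .
  have Kl: "(\<Sum>d\<in>UNIV. K d * l $ d) = 1" using l unfolding gC_k .
  have "\<exists>\<mu> \<nu>. \<forall>a d. M a d = K a * \<mu> d + \<nu> a * K d"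
  proof (rule bilinear_vanishing_on_kernel_decomp[OF Kl])
    fix X Y :: "3 \<Rightarrow> complex"
    assume "(\<Sum>d\<in>UNIV. K d * X d) = 0" "(\<Sum>d\<in>UNIV. K d * Y d) = 0"
    then have "gC g z (k z) (vec_lambda X) = 0" "gC g z (k z) (vec_lambda Y) = 0"
      unfolding gC_k by simp_all
    from co_geodetic_nabla_k_vanishes_on_perp[OF cg z this]
    show "(\<Sum>a\<in>UNIV. X a * (\<Sum>d\<in>UNIV. M a d * Y d)) = 0" unfolding gC_nabla by simp
  qed
  then obtain \<mu> \<nu> where M: "\<And>a d. M a d = K a * \<mu> d + \<nu> a * K d" by blast
  note identities = decomposed_derivative_trace_identities[where B = "\<lambda>a c. nabla a k z $ c"
      and k = "\<lambda>c. k z $ c" and l = "\<lambda>d. l $ d" and Gm = Gm, OF _ M _ _ _ Kl]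
  have "nabla a k z $ c = (\<Sum>d\<in>UNIV. M a d * Gm d c)" for a c
    unfolding M_def Gm_def using raise_lower[OF z] .
  moreover have "k z $ c = (\<Sum>d\<in>UNIV. K d * Gm d c)" for c
    unfolding K_def Gm_def using raise_lower[OF z] .
  moreover have "Gm a b = Gm b a" for a b
    unfolding Gm_def using ginv_symmetric[OF z] by simp
  moreover have "(\<Sum>d\<in>UNIV. K d * k z $ d) = 0"
    using k_null[OF z] unfolding gC_k .
  moreover have "(\<Sum>d\<in>UNIV. M a d * k z $ d) = 0" for a
    using nabla_k_perp_k[OF z, of a] unfolding gC_nabla .
  ultimately show "(\<Sum>a\<in>UNIV. k z $ a * nabla a k z $ c) = cov_div k z * k z $ c"
    and "(\<Sum>a\<in>UNIV. \<Sum>c\<in>UNIV. nabla a k z $ c * nabla c k z $ a) = (cov_div k z)^2"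
    unfolding cov_div_def by (rule identities(1), rule identities(2))
qed

lemma co_geodetic_imp_principal:
  assumes cg: "co_geodetic U g k" and x: "x \<in> U"
  shows "(\<Sum>a\<in>UNIV. \<Sum>b\<in>UNIV. k x $ a * k x $ b * PhiC g x a b) = 0"
proof -
  let ?\<theta> = "cov_div k"
  have \<theta>_diff: "?\<theta> differentiable at x"
    unfolding cov_div_def[abs_def] using nabla_k_differentiable[OF x] by (intro differentiable_sum) auto
  have geodesic: "covD g k k y = ?\<theta> y *s k y" if "y \<in> U" for y
    using co_geodetic_pointwise(1)[OF cg that]
    by (simp add: covD_eq_nabla vec_eq_iff mult.commute)
  have "cov_div (covD g k k) x = cov_div (\<lambda>y. ?\<theta> y *s k y) x"
    using nabla_cong_open[OF x geodesic] by (simp add: cov_div_def)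
  also have "\<dots> = (\<Sum>c\<in>UNIV. k x $ c * pd c ?\<theta> x) + (?\<theta> x)^2"
    using cov_div_scale[OF x \<theta>_diff k_differentiable[OF x]] by (simp add: power2_eq_square)
  finally have "(\<Sum>a\<in>UNIV. \<Sum>b\<in>UNIV. k x $ a * k x $ b * of_real (Ric g x a b)) = 0"
    unfolding contracted_ricci_identity[OF x k_Ck_on] co_geodetic_pointwise(2)[OF cg x] by simp
  moreover have "(\<Sum>a\<in>UNIV. \<Sum>b\<in>UNIV. k x $ a * k x $ b * PhiC g x a b)
      = (\<Sum>a\<in>UNIV. \<Sum>b\<in>UNIV. k x $ a * k x $ b * of_real (Ric g x a b)) - of_real (scal g x) / 3 * gC g x (k x) (k x)"
    unfolding PhiC_def Phi_def gC_def by (simp add: sum_3 algebra_simps)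
  ultimately show ?thesis using k_null[OF x] by simp
qed

lemma parallel_nabla_k:
  assumes par: "parallel_ns U g k" and z: "z \<in> U"
  shows "\<exists>\<beta>. nabla a k z = \<beta> *s k z"
proof -
  have "smooth_on U (\<lambda>_. axis a (1::real) :: real^3)"
    unfolding smooth_on_def using Ck_on_const by blast
  then show ?thesis
    using par sec_N_k z unfolding parallel_ns_def covD_axis[symmetric] by blast
qed

text \<open>If \<open>\<nabla>k = \<beta> \<otimes> k\<close> and \<open>g(Y, k) = 0\<close> on \<open>U\<close>, then \<open>g(\<nabla>\<^sub>a\<nabla>\<^sub>b k, Y) = -\<beta>\<^sub>b g(k, \<nabla>\<^sub>a Y) =
  \<beta>\<^sub>b g(\<nabla>\<^sub>a k, Y) = \<beta>\<^sub>a \<beta>\<^sub>b g(k, Y) = 0\<close>, so the Ricci identity makes \<open>R\<^sub>a\<^sub>b\<^sub>d\<^sup>c k\<^sup>d\<close> orthogonal to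
  \<open>k\<^sup>\<bottom>\<close>.\<close>

lemma parallel_curvature_aligned:
  assumes par: "parallel_ns U g k" and x: "x \<in> U" and v: "gC g x (k x) v = 0"
  shows "gC g x (\<chi> c. \<Sum>d\<in>UNIV. of_real (Riem g x a b d c) * k x $ d) v = 0"
proof -
  obtain Y where Y: "sec_Nperp U g k Y" "Y x = v"
    using exists_Nperp_extension[OF x v] by blast
  have Y_diff: "(\<lambda>y. Y y $ c) differentiable at x" for c
    using Y(1) smooth_on_component_Ck_on Ck_on_2_differentiable_at[OF open_domain _ x]
    unfolding sec_Nperp_def by blast
  have k_perp_Y: "gC g y (k y) (Y y) = 0" if "y \<in> U" for y
    using Y(1) that gC_commute[OF that, of "k y" "Y y"] unfolding sec_Nperp_def by simp
  have second: "gC g x (nabla a' (nabla b' k) x) v = 0" for a' b'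
  proof -
    obtain \<beta>a where \<beta>a: "nabla a' k x = \<beta>a *s k x" using parallel_nabla_k[OF par x] by blast
    obtain \<beta>b where \<beta>b: "nabla b' k x = \<beta>b *s k x" using parallel_nabla_k[OF par x] by blast
    have "pd a' (\<lambda>y. gC g y (k y) (Y y)) x = 0"
      by (rule pd_eq_0_if_vanishing_on_open[OF open_domain x]) (simp add: k_perp_Y)
    then have k_nabla_Y: "gC g x (k x) (nabla a' Y x) = - (\<beta>a * gC g x (k x) (Y x))"
      using pd_gC[OF x k_differentiable[OF x] Y_diff, of a'] \<beta>a
      by (simp add: gC_scaleC_left eq_neg_iff_add_eq_0 add.commute)
    have "pd a' (\<lambda>y. gC g y (nabla b' k y) (Y y)) x = 0"
    proof (rule pd_eq_0_if_vanishing_on_open[OF open_domain x])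
      fix y assume y: "y \<in> U"
      obtain \<beta> where "nabla b' k y = \<beta> *s k y" using parallel_nabla_k[OF par y] by blast
      then show "gC g y (nabla b' k y) (Y y) = 0" using k_perp_Y[OF y] by (simp add: gC_scaleC_left)
    qed
    then have "gC g x (nabla a' (nabla b' k) x) (Y x) = - gC g x (nabla b' k x) (nabla a' Y x)"
      using pd_gC[OF x nabla_k_differentiable[OF x] Y_diff, of a'] by (simp add: eq_neg_iff_add_eq_0)
    also have "\<dots> = \<beta>b * \<beta>a * gC g x (k x) (Y x)"
      unfolding \<beta>b gC_scaleC_left k_nabla_Y by simp
    finally show ?thesis using k_perp_Y[OF x] Y(2) by simp
  qed
  have "(\<chi> c. \<Sum>d\<in>UNIV. of_real (Riem g x a b d c) * k x $ d) = nabla a (nabla b k) x - nabla b (nabla a k) x"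
    using ricci_identity[OF x k_Ck_on] by (simp add: vec_eq_iff)
  then show ?thesis using second[of a b] second[of b a] by (simp add: gC_diff_left)
qed

lemma parallel_ricci_k_aligned:
  assumes par: "parallel_ns U g k" and x: "x \<in> U"
  shows "(\<Sum>c\<in>UNIV. k x $ c * (\<Sum>e\<in>UNIV. of_real (Riem g x c e a e))) * lower g x (k x) b
       = (\<Sum>c\<in>UNIV. k x $ c * (\<Sum>e\<in>UNIV. of_real (Riem g x c e b e))) * lower g x (k x) a"
proof -
  obtain l where l: "gC g x (k x) l = 1" using exists_dual_to_k[OF x] by blast
  define K where "K = lower g x (k x)"
  define Rl where "Rl a b d c = complex_of_real (Riem_low x a b d c)" for a b d c
  define R where "R a b d c = complex_of_real (Riem g x a b d c)" for a b d c
  define Gm where "Gm d c = complex_of_real (ginv g x $ d $ c)" for d c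
  have gC_k: "gC g x (k x) w = (\<Sum>d\<in>UNIV. K d * w $ d)" for w
    unfolding K_def using gC_eq_lower[OF x] .
  have aligned: "(\<Sum>c\<in>UNIV. (\<Sum>d\<in>UNIV. Rl a b d c * k x $ d) * Z c) = 0"
    if "(\<Sum>d\<in>UNIV. K d * Z d) = 0" for a b Z
  proof -
    have "gC g x (k x) (vec_lambda Z) = 0" using that unfolding gC_k by simp
    from parallel_curvature_aligned[OF par x this, of a b] show ?thesis
      unfolding gC_def Rl_def Riem_low_def by (simp add: sum_3 algebra_simps)
  qed
  have "R a b d c = (\<Sum>f\<in>UNIV. Rl a b d f * Gm f c)" for a b d c
    unfolding R_def Rl_def Gm_def Riem_eq_Riem_low_ginv[OF x] by simp
  moreover have "Rl a b c d = Rl c d a b" for a b c d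
    unfolding Rl_def Riem_low_pair_symmetric[OF x, of a b c d] ..
  moreover have "Rl a b d c = - Rl a b c d" for a b d c
    unfolding Rl_def Riem_low_antisym34[OF x, of a b d c] by simp
  moreover have "k x $ c = (\<Sum>d\<in>UNIV. K d * Gm d c)" for c
    unfolding K_def Gm_def using raise_lower[OF x] .
  moreover have "Gm a b = Gm b a" for a b
    unfolding Gm_def using ginv_symmetric[OF x] by simp
  moreover have "(\<Sum>d\<in>UNIV. K d * l $ d) = 1"
    using l unfolding gC_k .
  ultimately show ?thesis
    unfolding R_def[symmetric] K_def[symmetric]
    by (rule aligned_curvature_imp_aligned_ricci[where k = "\<lambda>c. k x $ c" and l = "\<lambda>d. l $ d"])
      (rule aligned)
qed

lemma parallel_imp_multiple_principal:
  assumes par: "parallel_ns U g k" and x: "x \<in> U"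
  shows "(\<Sum>c\<in>UNIV. k x $ c * PhiC g x c a) * lower g x (k x) b
       - (\<Sum>c\<in>UNIV. k x $ c * PhiC g x c b) * lower g x (k x) a = 0"
proof -
  have Phi_k: "(\<Sum>c\<in>UNIV. k x $ c * PhiC g x c a') = (\<Sum>c\<in>UNIV. k x $ c * (\<Sum>e\<in>UNIV. of_real (Riem g x c e a' e)))
      - of_real (scal g x) / 3 * lower g x (k x) a'" for a'
    unfolding PhiC_def Phi_def Ric_def lower_def
    by (simp add: sum_3 algebra_simps g_symmetric[OF x])
  show ?thesis
    unfolding Phi_k using parallel_ricci_k_aligned[OF par x, of a b] by (simp add: algebra_simps)
qed
end

theorem mainTheorem11:
  fixes U :: "(real^3) set" and g :: "real^3 \<Rightarrow> real^3^3" and k :: "real^3 \<Rightarrow> complex^3"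
  assumes "pr_metric U g" and "null_generator U g k"
  shows "(co_geodetic U g k \<longrightarrow>
            (\<forall>x\<in>U. (\<Sum>a\<in>UNIV. \<Sum>b\<in>UNIV. k x $ a * k x $ b * PhiC g x a b) = 0))
       \<and> (parallel_ns U g k \<longrightarrow>
            (\<forall>x\<in>U. \<forall>a b. (\<Sum>c\<in>UNIV. k x $ c * PhiC g x c a) * lower g x (k x) b
                         - (\<Sum>c\<in>UNIV. k x $ c * PhiC g x c b) * lower g x (k x) a = 0))"
proof -
  interpret null_chart U g k
    using assms by (simp add: null_chart_def metric_chart_def null_chart_axioms_def)
  show ?thesis
    using co_geodetic_imp_principal parallel_imp_multiple_principal by blast
qed

end
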